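(* Let $A_6$ be the Cayley-Dickson algebra of 64-nions with canonical basis $e_0,\dots,e_{63}$. Then: (i) the 63 imaginary units split into 35 units each lying on exactly 21 defective triples, 21 units each lying on exactly 15 defective triples, and 7 units lying on no defective triple; (ii) the incidence structure $\mathcal{C}_6$ whose points are the 21 units of the second kind and whose lines are the defective triples consisting solely of such units is a $(21_5,35_3)$-configuration isomorphic to the combinatorial Grassmannian $G_2(7)$; (iii) there is a bijection $\varphi$ from the set of geometric hyperplanes of $\mathcal{C}_6$ (of which there are 63) onto $\{e_1,\dots,e_{63}\}$ mapping the set of lines of the Veldkamp space $\mathcal{V}(\mathcal{C}_6)$ bijectively onto the set of distinguished triples of $A_6$ (so $\mathcal{V}(\mathcal{C}_6)\cong\mathrm{PG}(5,2)$), such that the geometric hyperplanes with $9$ points (a line together with its complement, the latter being a Pasch configuration $G_2(4)$), $11$ points (a point together with its complement, the latter being a Desargues configuration $G_2(5)$) and $15$ points (a copy of $G_2(6)$) are mapped onto the units of the first, second and third kind in (i), respectively.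
   Context: Cayley-Dickson algebras: $A_0=\mathbb{R}$ with trivial conjugation; $A_{N+1}$ is the set of ordered pairs $(x,y)$ with $x,y\in A_N$, with conjugation $(x,y)^*=(x^*,-y)$ and multiplication $(x,y)(X,Y)=(xX-Yy^*,\,x^*Y+Xy)$. The canonical basis of $A_0$ is $e_0=1$; if $e_0,\dots,e_{2^N-1}$ is the canonical basis of $A_N$, the canonical basis of $A_{N+1}$ is $e_a=(e_a,0)$ and $e_{2^N+a}=(0,e_a)$ for $0\le a\le 2^N-1$. The imaginary units of $A_N$ are $e_1,\dots,e_{2^N-1}$. A distinguished triple is a set $\{e_a,e_b,e_c\}$ with $1\le a<b<c\le 2^N-1$ and $e_ae_b=\pm e_c$; it is called ordinary if $a+b=c$ and defective if $a+b\neq c$. A $(v_r,b_k)$-configuration is a point-line incidence structure with $v$ points and $b$ lines, each line having $k$ points, each point on $r$ lines, two distinct points on at most one common line. The combinatorial Grassmannian $G_2(n)$ is the point-line incidence structure whose points are the $2$-element subsets of $\{1,\dots,n\}$, whose lines are the $3$-element subsets, incidence being inclusion. A geometric hyperplane of a point-line incidence structure is a proper subset $H$ of the point set such that every line is either contained in $H$ or meets $H$ in exactly one point. The Veldkamp space $\mathcal{V}(\mathcal{C})$ has as points the geometric hyperplanes of $\mathcal{C}$; for distinct hyperplanes $H',H''$ the Veldkamp line $H'H''$ is the set of all geometric hyperplanes $H$ with $H=H'$, $H=H''$, or $H'\cap H''=H'\cap H=H''\cap H$. *)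

theory Defs
  imports Complex_Main
begin

text \<open>An element of A_N is represented by its coordinate function w.r.t. the canonical
basis, i.e. a function nat => real supported on {0..<2^N}.  An element of A_(N+1) is
the pair (x,y) of A_N elements, x = first 2^N coordinates, y = next 2^N coordinates;
this matches the canonical basis convention e_a = (e_a,0), e_(2^N+a) = (0,e_a).\<close>

definition cd_lo :: "nat \<Rightarrow> (nat \<Rightarrow> real) \<Rightarrow> nat \<Rightarrow> real" where
  "cd_lo n u = (\<lambda>i. if i < 2^n then u i else 0)"

definition cd_hi :: "nat \<Rightarrow> (nat \<Rightarrow> real) \<Rightarrow> nat \<Rightarrow> real" where
  "cd_hi n u = (\<lambda>i. if i < 2^n then u (2^n + i) else 0)"

definition cd_pair :: "nat \<Rightarrow> (nat \<Rightarrow> real) \<Rightarrow> (nat \<Rightarrow> real) \<Rightarrow> nat \<Rightarrow> real" where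
  "cd_pair n x y = (\<lambda>i. if i < 2^n then x i else if i < 2^Suc n then y (i - 2^n) else 0)"

fun cd_conj :: "nat \<Rightarrow> (nat \<Rightarrow> real) \<Rightarrow> nat \<Rightarrow> real" where
  "cd_conj 0 u = (\<lambda>i. if i = 0 then u 0 else 0)"
| "cd_conj (Suc n) u = cd_pair n (cd_conj n (cd_lo n u)) (\<lambda>i. - cd_hi n u i)"

fun cd_mult :: "nat \<Rightarrow> (nat \<Rightarrow> real) \<Rightarrow> (nat \<Rightarrow> real) \<Rightarrow> nat \<Rightarrow> real" where
  "cd_mult 0 u v = (\<lambda>i. if i = 0 then u 0 * v 0 else 0)"
| "cd_mult (Suc n) u v =
     (let x = cd_lo n u; y = cd_hi n u; X = cd_lo n v; Y = cd_hi n v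
      in cd_pair n (\<lambda>i. cd_mult n x X i - cd_mult n Y (cd_conj n y) i)
                   (\<lambda>i. cd_mult n (cd_conj n x) Y i + cd_mult n X y i))"

definition cd_basis :: "nat \<Rightarrow> nat \<Rightarrow> real" where
  "cd_basis a = (\<lambda>i. if i = a then 1 else 0)"

text \<open>Imaginary units of A_N, identified with their indices a (e_a).\<close>
definition cd_units :: "nat \<Rightarrow> nat set" where
  "cd_units N = {1..2^N - 1}"

definition distinguished_triple :: "nat \<Rightarrow> nat set \<Rightarrow> bool" where
  "distinguished_triple N T \<longleftrightarrow>
     (\<exists>a b c. T = {a, b, c} \<and> 1 \<le> a \<and> a < b \<and> b < c \<and> c \<le> 2^N - 1 \<and>
        (cd_mult N (cd_basis a) (cd_basis b) = cd_basis c \<or>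
         cd_mult N (cd_basis a) (cd_basis b) = (\<lambda>i. - cd_basis c i)))"

definition defective_triple :: "nat \<Rightarrow> nat set \<Rightarrow> bool" where
  "defective_triple N T \<longleftrightarrow> distinguished_triple N T \<and>
     (\<exists>a b c. T = {a, b, c} \<and> a < b \<and> b < c \<and> a + b \<noteq> c)"

definition defect_count :: "nat \<Rightarrow> nat \<Rightarrow> nat" where
  "defect_count N u = card {T. defective_triple N T \<and> u \<in> T}"

definition configuration ::
  "'p set \<Rightarrow> 'l set \<Rightarrow> ('p \<Rightarrow> 'l \<Rightarrow> bool) \<Rightarrow> nat \<Rightarrow> nat \<Rightarrow> nat \<Rightarrow> nat \<Rightarrow> bool" where
  "configuration P L I v r b k \<longleftrightarrow>
     finite P \<and> finite L \<and> card P = v \<and> card L = b \<and>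
     (\<forall>l\<in>L. card {p\<in>P. I p l} = k) \<and>
     (\<forall>p\<in>P. card {l\<in>L. I p l} = r) \<and>
     (\<forall>p\<in>P. \<forall>q\<in>P. p \<noteq> q \<longrightarrow> card {l\<in>L. I p l \<and> I q l} \<le> 1)"

definition isomorphic_inc ::
  "'p set \<Rightarrow> 'l set \<Rightarrow> ('p \<Rightarrow> 'l \<Rightarrow> bool) \<Rightarrow>
   'q set \<Rightarrow> 'm set \<Rightarrow> ('q \<Rightarrow> 'm \<Rightarrow> bool) \<Rightarrow> bool" where
  "isomorphic_inc P L I P' L' I' \<longleftrightarrow>
     (\<exists>f g. bij_betw f P P' \<and> bij_betw g L L' \<and>
        (\<forall>p\<in>P. \<forall>l\<in>L. I p l \<longleftrightarrow> I' (f p) (g l)))"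

definition G2_points :: "nat \<Rightarrow> nat set set" where
  "G2_points n = {S. S \<subseteq> {1..n} \<and> card S = 2}"

definition G2_lines :: "nat \<Rightarrow> nat set set" where
  "G2_lines n = {S. S \<subseteq> {1..n} \<and> card S = 3}"

definition isomorphic_to_G2 :: "'p set \<Rightarrow> 'l set \<Rightarrow> ('p \<Rightarrow> 'l \<Rightarrow> bool) \<Rightarrow> nat \<Rightarrow> bool" where
  "isomorphic_to_G2 P L I n \<longleftrightarrow>
     isomorphic_inc P L I (G2_points n) (G2_lines n) (\<lambda>p l. p \<subseteq> l)"

definition geometric_hyperplane ::
  "'p set \<Rightarrow> 'l set \<Rightarrow> ('p \<Rightarrow> 'l \<Rightarrow> bool) \<Rightarrow> 'p set \<Rightarrow> bool" where
  "geometric_hyperplane P L I H \<longleftrightarrow> H \<subset> P \<and>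
     (\<forall>l\<in>L. {p\<in>P. I p l} \<subseteq> H \<or> card {p\<in>P. I p l \<and> p \<in> H} = 1)"

definition hyperplanes :: "'p set \<Rightarrow> 'l set \<Rightarrow> ('p \<Rightarrow> 'l \<Rightarrow> bool) \<Rightarrow> 'p set set" where
  "hyperplanes P L I = {H. geometric_hyperplane P L I H}"

definition veldkamp_line ::
  "'p set \<Rightarrow> 'l set \<Rightarrow> ('p \<Rightarrow> 'l \<Rightarrow> bool) \<Rightarrow> 'p set \<Rightarrow> 'p set \<Rightarrow> 'p set set" where
  "veldkamp_line P L I H1 H2 = {H \<in> hyperplanes P L I.
      H = H1 \<or> H = H2 \<or> (H1 \<inter> H2 = H1 \<inter> H \<and> H1 \<inter> H = H2 \<inter> H)}"

definition veldkamp_lines :: "'p set \<Rightarrow> 'l set \<Rightarrow> ('p \<Rightarrow> 'l \<Rightarrow> bool) \<Rightarrow> 'p set set set" where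
  "veldkamp_lines P L I = {veldkamp_line P L I H1 H2 | H1 H2.
      H1 \<in> hyperplanes P L I \<and> H2 \<in> hyperplanes P L I \<and> H1 \<noteq> H2}"

definition collinear :: "'l set \<Rightarrow> ('p \<Rightarrow> 'l \<Rightarrow> bool) \<Rightarrow> 'p \<Rightarrow> 'p \<Rightarrow> bool" where
  "collinear L I p q \<longleftrightarrow> (\<exists>l\<in>L. I p l \<and> I q l)"

definition kind :: "nat \<Rightarrow> nat set" where
  "kind d = {u \<in> cd_units 6. defect_count 6 u = d}"

definition C6_points :: "nat set" where
  "C6_points = kind 15"

definition C6_lines :: "nat set set" where
  "C6_lines = {T. defective_triple 6 T \<and> T \<subseteq> C6_points}"

end

(*
  Multiplying basis elements of a Cayley-Dickson algebra adds their indices bitwise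
  modulo 2, up to sign: e_a e_b = +-e_(a XOR b).  Hence the distinguished triples are
  the sets {a, b, a XOR b}, and such a triple is ordinary exactly when two of its members
  have disjoint sets of binary digits.  Counting bit patterns, a unit with k binary
  digits lies on (2^k - 2)(2^(N-k) - 1)/2 defective triples of A_N, which for N = 6
  gives 0, 15 and 21 for k in {1,6}, {2,5} and {3,4}.

  Read a unit u of A_6 as the splitting of {0,...,6} into the bits of u and the rest.
  Units with 2 or 5 bits are then the 2-subsets of {0,...,6}, and the defective triples
  among them are the three pairs inside a 3-subset, so C_6 is G_2(7).  The geometric
  hyperplanes of G_2(S) are the sets H_X of pairs not separated by a splitting
  {X, S - X}, the Veldkamp line through H_X and H_Y is {H_X, H_Y, H_(X sym-diff Y)},
  and H_X has C(k,2) + C(7-k,2) points when |X| = k.  So u |-> H_(bits of u) is the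
  inverse of the required bijection.
*)

theory Submission
  imports Defs
begin

section \<open>Bit sets of natural numbers\<close>

definition bitset :: "nat \<Rightarrow> nat set" where
  "bitset n = {k. bit n k}"

lemma bitset_xor: "bitset (xor a b) = sym_diff (bitset a) (bitset b)"
  by (auto simp: bitset_def bit_xor_iff)

lemma xor_self_left [simp]: "xor a (xor a b) = (b::nat)"
  by (simp flip: xor.assoc)

lemma xor_self_right [simp]: "xor (xor a b) b = (a::nat)"
  by (simp add: xor.assoc)

lemma xor_eq_0_iff: "xor a b = 0 \<longleftrightarrow> a = (b::nat)"
  by (metis xor_self_left xor.right_neutral xor_self_eq)

lemma xor_eq_left_iff: "xor a b = a \<longleftrightarrow> b = (0::nat)"
  by (metis xor_self_left xor_self_eq xor.right_neutral)

lemma xor_eq_right_iff: "xor a b = b \<longleftrightarrow> a = (0::nat)"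
  by (metis xor_self_right xor_self_eq xor.left_neutral)

lemma bitset_eq_iff: "bitset a = bitset b \<longleftrightarrow> a = b"
  by (auto simp: bitset_def bit_eq_iff)

lemma bitset_0 [simp]: "bitset 0 = {}"
  by (simp add: bitset_def)

lemma bitset_empty_iff: "bitset n = {} \<longleftrightarrow> n = 0"
  using bitset_eq_iff[of n 0] by (simp add: bitset_def)

lemma bitset_subset_iff: "bitset n \<subseteq> {..<N} \<longleftrightarrow> n < 2 ^ N"
proof -
  have "bitset n \<subseteq> {..<N} \<longleftrightarrow> take_bit N n = n"
    by (auto simp: bitset_def bit_eq_iff bit_take_bit_iff)
  then show ?thesis by (simp add: take_bit_nat_eq_self_iff)
qed

lemma bij_betw_bitset: "bij_betw bitset {..<2 ^ N} (Pow {..<N})"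
proof -
  have inj: "inj_on bitset {..<2 ^ N}"
    by (auto intro: inj_onI simp: bitset_eq_iff)
  moreover have sub: "bitset ` {..<2 ^ N} \<subseteq> Pow {..<N}"
    by (auto simp flip: bitset_subset_iff)
  moreover have "card (bitset ` {..<2 ^ N}) = card (Pow {..<N})"
    by (simp add: card_image[OF inj] card_Pow)
  ultimately show ?thesis
    by (simp add: bij_betw_def card_subset_eq)
qed

lemma xor_less_pow: "a < 2 ^ n \<Longrightarrow> b < 2 ^ n \<Longrightarrow> xor a b < (2::nat) ^ n"
  by (auto simp flip: bitset_subset_iff simp: bitset_xor)

lemma add_eq_xor_iff: "a + b = xor a b \<longleftrightarrow> bitset a \<inter> bitset b = {}"
proof
  assume sum: "a + b = xor a b"
  have "xor a b + and a b = or (xor a b) (and a b)"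
    by (rule disjunctive_add_eq_or) (auto simp: bit_eq_iff bit_simps)
  also have "\<dots> = or a b"
    by (auto simp: bit_eq_iff bit_simps)
  finally have "xor a b + and a b = or a b" .
  moreover have "and a b + or a b = a + b"
    using plus_and_or[of "int a" "int b"] by (simp flip: of_nat_and_eq of_nat_or_eq)
  ultimately have "and a b = 0" using sum by linarith
  then show "bitset a \<inter> bitset b = {}"
    by (auto simp: bitset_def bit_eq_iff bit_and_iff)
next
  assume "bitset a \<inter> bitset b = {}"
  then have "and a b = 0" by (auto simp: bitset_def bit_eq_iff bit_and_iff)
  then show "a + b = xor a b" by (rule disjunctive_add_eq_xor)
qed

lemma bitset_pow: "bitset (2 ^ n) = {n}"
  by (auto simp: bitset_def bit_exp_iff)

lemma bitset_mask: "bitset (2 ^ n - 1) = {..<n}"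
proof -
  have "bitset (mask n) = {..<n}"
    by (auto simp: bitset_def bit_mask_iff)
  then show ?thesis
    by (simp add: mask_eq_exp_minus_1)
qed

lemma bitset_pow_add:
  assumes "a < 2 ^ n"
  shows "bitset (2 ^ n + a) = insert n (bitset a)"
proof -
  have "n \<notin> bitset a"
    using assms by (auto simp flip: bitset_subset_iff)
  then have "2 ^ n + a = xor (2 ^ n) a"
    by (simp add: add_eq_xor_iff bitset_pow)
  then show ?thesis
    using \<open>n \<notin> bitset a\<close> by (auto simp: bitset_xor bitset_pow)
qed

lemma xor_pow_add_left: "a < 2 ^ n \<Longrightarrow> b < 2 ^ n \<Longrightarrow> xor (2 ^ n + a) b = 2 ^ n + xor a (b::nat)"
  using xor_less_pow[of a n b]
  by (auto simp flip: bitset_eq_iff simp: bitset_pow_add bitset_xor bitset_subset_iff[symmetric])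

lemma xor_pow_add_both: "a < 2 ^ n \<Longrightarrow> b < 2 ^ n \<Longrightarrow> xor (2 ^ n + a) (2 ^ n + b) = xor a (b::nat)"
  by (auto simp flip: bitset_eq_iff simp: bitset_pow_add bitset_xor bitset_subset_iff[symmetric])

section \<open>Products of basis elements\<close>

definition cd_scale :: "real \<Rightarrow> (nat \<Rightarrow> real) \<Rightarrow> nat \<Rightarrow> real" where
  "cd_scale c u = (\<lambda>i. c * u i)"

lemma cd_scale_0: "cd_scale 0 u = (\<lambda>_. 0)"
  by (simp add: cd_scale_def)

lemma cd_scale_scale: "cd_scale a (cd_scale b u) = cd_scale (a * b) u"
  by (simp add: cd_scale_def mult.assoc)

lemma cd_lo_scale: "cd_lo n (cd_scale c u) = cd_scale c (cd_lo n u)"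
  by (auto simp: cd_lo_def cd_scale_def)

lemma cd_hi_scale: "cd_hi n (cd_scale c u) = cd_scale c (cd_hi n u)"
  by (auto simp: cd_hi_def cd_scale_def)

lemma cd_pair_scale: "cd_pair n (cd_scale c x) (cd_scale c y) = cd_scale c (cd_pair n x y)"
  by (auto simp: cd_pair_def cd_scale_def)

lemma cd_conj_scale: "cd_conj n (cd_scale c u) = cd_scale c (cd_conj n u)"
proof (induction n arbitrary: u)
  case 0
  then show ?case by (auto simp: cd_scale_def)
next
  case (Suc n)
  have "(\<lambda>i. - cd_hi n (cd_scale c u) i) = cd_scale c (\<lambda>i. - cd_hi n u i)"
    unfolding cd_hi_scale by (simp add: cd_scale_def)
  then show ?case by (simp add: cd_lo_scale Suc cd_pair_scale)
qed

lemma cd_mult_scale: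
  "cd_mult n (cd_scale c u) v = cd_scale c (cd_mult n u v) \<and>
   cd_mult n u (cd_scale c v) = cd_scale c (cd_mult n u v)"
proof (induction n arbitrary: u v)
  case 0
  then show ?case by (auto simp: cd_scale_def)
next
  case (Suc n)
  have diff: "(\<lambda>i. cd_scale c f i - cd_scale c g i) = cd_scale c (\<lambda>i. f i - g i)"
   and add: "(\<lambda>i. cd_scale c f i + cd_scale c g i) = cd_scale c (\<lambda>i. f i + g i)" for f g
    by (auto simp: cd_scale_def algebra_simps)
  show ?case
    by (simp add: Let_def cd_lo_scale cd_hi_scale cd_conj_scale Suc diff add cd_pair_scale)
qed

lemma cd_mult_zero:
  "cd_mult n (\<lambda>_. 0) v = (\<lambda>_. 0)" "cd_mult n u (\<lambda>_. 0) = (\<lambda>_. 0)"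
  using cd_mult_scale[of n 0 u v] by (simp_all add: cd_scale_0)

lemma cd_conj_zero: "cd_conj n (\<lambda>_. 0) = (\<lambda>_. 0)"
  using cd_conj_scale[of n 0] by (simp add: cd_scale_0)

lemma cd_lo_basis: "cd_lo n (cd_basis a) = (if a < 2 ^ n then cd_basis a else (\<lambda>_. 0))"
  by (auto simp: cd_lo_def cd_basis_def)

lemma cd_hi_basis:
  "cd_hi n (cd_basis a) = (if 2 ^ n \<le> a \<and> a < 2 ^ Suc n then cd_basis (a - 2 ^ n) else (\<lambda>_. 0))"
  by (auto simp: cd_hi_def cd_basis_def fun_eq_iff)

lemma cd_pair_basis_lo: "a < 2 ^ n \<Longrightarrow> cd_pair n (cd_scale s (cd_basis a)) (\<lambda>_. 0) = cd_scale s (cd_basis a)"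
  by (auto simp: cd_pair_def cd_basis_def cd_scale_def fun_eq_iff)

lemma cd_pair_basis_hi:
  "b < 2 ^ n \<Longrightarrow> cd_pair n (\<lambda>_. 0) (cd_scale s (cd_basis b)) = cd_scale s (cd_basis (2 ^ n + b))"
  by (auto simp: cd_pair_def cd_basis_def cd_scale_def fun_eq_iff)

lemma cd_conj_basis: "a < 2 ^ n \<Longrightarrow> \<exists>s\<in>{1, -1}. cd_conj n (cd_basis a) = cd_scale s (cd_basis a)"
proof (induction n arbitrary: a)
  case 0
  then show ?case by (auto simp: cd_scale_def cd_basis_def)
next
  case (Suc n)
  show ?case
  proof (cases "a < 2 ^ n")
    case True
    then show ?thesis
      using Suc.IH[OF True] by (auto simp: cd_lo_basis cd_hi_basis cd_pair_basis_lo)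
  next
    case False
    have "cd_conj (Suc n) (cd_basis a) = cd_pair n (\<lambda>_. 0) (cd_scale (-1) (cd_basis (a - 2 ^ n)))"
      using False Suc.prems by (simp add: cd_lo_basis cd_hi_basis cd_conj_zero cd_scale_def)
    also have "\<dots> = cd_scale (-1) (cd_basis a)"
      using False Suc.prems by (simp add: cd_pair_basis_hi)
    finally show ?thesis by auto
  qed
qed

lemma cd_mult_Suc:
  "cd_mult (Suc n) u v = cd_pair n
     (\<lambda>i. cd_mult n (cd_lo n u) (cd_lo n v) i - cd_mult n (cd_hi n v) (cd_conj n (cd_hi n u)) i)
     (\<lambda>i. cd_mult n (cd_conj n (cd_lo n u)) (cd_hi n v) i + cd_mult n (cd_lo n v) (cd_hi n u) i)"
  by (simp add: Let_def)

lemma cd_mult_Suc_basis: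
  assumes "a < 2 ^ n" "b < 2 ^ n"
  shows "cd_mult (Suc n) (cd_basis a) (cd_basis b) = cd_pair n (cd_mult n (cd_basis a) (cd_basis b)) (\<lambda>_. 0)"
    and "cd_mult (Suc n) (cd_basis a) (cd_basis (2 ^ n + b)) =
      cd_pair n (\<lambda>_. 0) (cd_mult n (cd_conj n (cd_basis a)) (cd_basis b))"
    and "cd_mult (Suc n) (cd_basis (2 ^ n + a)) (cd_basis b) =
      cd_pair n (\<lambda>_. 0) (cd_mult n (cd_basis b) (cd_basis a))"
    and "cd_mult (Suc n) (cd_basis (2 ^ n + a)) (cd_basis (2 ^ n + b)) =
      cd_pair n (\<lambda>i. - cd_mult n (cd_basis b) (cd_conj n (cd_basis a)) i) (\<lambda>_. 0)"
  using assms by (simp_all add: cd_mult_Suc cd_lo_basis cd_hi_basis cd_mult_zero cd_conj_zero)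

lemma less_pow_Suc_cases:
  assumes "a < 2 ^ Suc n"
  obtains "a < 2 ^ n" | a' where "a = 2 ^ n + a'" "a' < (2::nat) ^ n"
proof (cases "a < 2 ^ n")
  case False
  then show thesis
    using assms by (intro that(2)[of "a - 2 ^ n"]) auto
qed

lemma cd_mult_basis:
  "a < 2 ^ n \<Longrightarrow> b < 2 ^ n \<Longrightarrow>
   \<exists>s\<in>{1, -1}. cd_mult n (cd_basis a) (cd_basis b) = cd_scale s (cd_basis (xor a b))"
proof (induction n arbitrary: a b)
  case 0
  then show ?case by (auto simp: cd_scale_def cd_basis_def)
next
  case (Suc n)
  have neg: "(\<lambda>i. - cd_scale c u i) = cd_scale (- c) u" for c u
    by (simp add: cd_scale_def)
  note simps = cd_mult_Suc_basis cd_mult_scale cd_scale_scale cd_pair_basis_lo cd_pair_basis_hi neg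
  from Suc.prems(1) show ?case
  proof (cases rule: less_pow_Suc_cases)
    case a: 1
    from Suc.prems(2) show ?thesis
    proof (cases rule: less_pow_Suc_cases)
      case b: 1
      then show ?thesis
        using Suc.IH[OF a b] a xor_less_pow[OF a b] by (auto simp: simps simp del: cd_mult.simps)
    next
      case b: (2 b')
      then show ?thesis
        using Suc.IH[OF a b(2)] cd_conj_basis[OF a] a xor_less_pow[OF a b(2)] xor_pow_add_left[OF b(2) a]
        by (auto simp: simps xor.commute simp del: cd_mult.simps)
    qed
  next
    case a: (2 a')
    from Suc.prems(2) show ?thesis
    proof (cases rule: less_pow_Suc_cases)
      case b: 1
      then show ?thesis
        using Suc.IH[OF b a(2)] a xor_less_pow[OF b a(2)] xor_pow_add_left[OF a(2) b]
        by (auto simp: simps xor.commute simp del: cd_mult.simps)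
    next
      case b: (2 b')
      then show ?thesis
        using Suc.IH[OF b(2) a(2)] cd_conj_basis[OF a(2)] a xor_less_pow[OF b(2) a(2)] xor_pow_add_both[OF a(2) b(2)]
        by (auto simp: simps xor.commute simp del: cd_mult.simps)
    qed
  qed
qed

section \<open>Distinguished and defective triples\<close>

lemma cd_mult_basis_eq_pm_iff:
  assumes "a < 2 ^ N" "b < 2 ^ N"
  shows "(cd_mult N (cd_basis a) (cd_basis b) = cd_basis c \<or>
          cd_mult N (cd_basis a) (cd_basis b) = (\<lambda>i. - cd_basis c i)) \<longleftrightarrow> c = xor a b"
proof -
  obtain s where "s \<in> {1, -1}" "cd_mult N (cd_basis a) (cd_basis b) = cd_scale s (cd_basis (xor a b))"
    using cd_mult_basis assms by blast
  then show ?thesis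
    by (auto simp: cd_scale_def cd_basis_def fun_eq_iff split: if_splits)
qed

lemma mem_cd_units: "u \<in> cd_units N \<longleftrightarrow> 0 < u \<and> u < 2 ^ N"
  by (auto simp: cd_units_def)

lemma xor_mem_cd_units: "a \<in> cd_units N \<Longrightarrow> b \<in> cd_units N \<Longrightarrow> a \<noteq> b \<Longrightarrow> xor a b \<in> cd_units N"
  using xor_less_pow[of a N b] by (auto simp: mem_cd_units xor_eq_0_iff intro!: Nat.gr0I)

lemma distinguished_triple_sorted:
  "distinguished_triple N T \<longleftrightarrow>
     (\<exists>a b c. T = {a, b, c} \<and> 0 < a \<and> a < b \<and> b < c \<and> c < 2 ^ N \<and> c = xor a b)"
proof -
  have "(cd_mult N (cd_basis a) (cd_basis b) = cd_basis c \<or>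
         cd_mult N (cd_basis a) (cd_basis b) = (\<lambda>i. - cd_basis c i)) \<longleftrightarrow> c = xor a b"
    if "a < b" "b < c" "c < 2 ^ N" for a b c
    using that by (intro cd_mult_basis_eq_pm_iff) auto
  moreover have "c \<le> 2 ^ N - 1 \<longleftrightarrow> c < (2::nat) ^ N" for c
    using zero_less_power[of "2::nat" N] by linarith
  moreover have "1 \<le> a \<longleftrightarrow> 0 < (a::nat)" for a
    by linarith
  ultimately show ?thesis
    unfolding distinguished_triple_def by metis
qed

lemma xor_mem_xor_triple:
  "p \<in> {a, b, xor a b} \<Longrightarrow> q \<in> {a, b, xor a b} \<Longrightarrow> xor p q \<in> {a, b, xor (a::nat) b, 0}"
proof -
  have "xor b (xor a b) = a" "xor (xor a b) a = b" "xor b a = xor a b"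
    by (metis xor.commute xor_self_left)+
  then show "p \<in> {a, b, xor a b} \<Longrightarrow> q \<in> {a, b, xor a b} \<Longrightarrow> xor p q \<in> {a, b, xor a b, 0}"
    by (elim insertE emptyE) (simp_all only: xor_self_left xor_self_right xor_self_eq insert_iff simp_thms)
qed

lemma sorted_triple_of_xor:
  fixes a b :: nat
  assumes "0 < a" "0 < b" "a \<noteq> b"
  obtains x y z where "{a, b, xor a b} = {x, y, z}" "0 < x" "x < y" "y < z" "z = xor x y"
proof -
  let ?T = "{a, b, xor a b}"
  have ab: "xor a b \<noteq> a" "xor a b \<noteq> b" "xor a b \<noteq> 0"
    using assms by (simp_all add: xor_eq_left_iff xor_eq_right_iff xor_eq_0_iff)
  obtain x y z where T: "?T = {x, y, z}" "x < y" "y < z"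
    using ab assms(3) by (metis insert_commute linorder_neq_iff)
  have pos: "0 < x" "0 < y"
    using T ab assms by auto
  then have "xor x y \<noteq> x" "xor x y \<noteq> y" "xor x y \<noteq> 0"
    using \<open>x < y\<close> by (auto simp: xor_eq_left_iff xor_eq_right_iff xor_eq_0_iff)
  moreover have "xor x y \<in> {a, b, xor a b, 0}"
    using xor_mem_xor_triple[of x a b y] T by auto
  ultimately have "z = xor x y"
    using T by auto
  then show ?thesis
    using that T pos by blast
qed

lemma distinguished_triple_iff:
  "distinguished_triple N T \<longleftrightarrow>
     (\<exists>a b. a \<in> cd_units N \<and> b \<in> cd_units N \<and> a \<noteq> b \<and> T = {a, b, xor a b})"
proof
  assume "distinguished_triple N T"
  then obtain a b c where "T = {a, b, c}" "0 < a" "a < b" "b < c" "c < 2 ^ N" "c = xor a b"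
    unfolding distinguished_triple_sorted by blast
  then show "\<exists>a b. a \<in> cd_units N \<and> b \<in> cd_units N \<and> a \<noteq> b \<and> T = {a, b, xor a b}"
    by (intro exI[of _ a] exI[of _ b]) (auto simp: mem_cd_units)
next
  assume "\<exists>a b. a \<in> cd_units N \<and> b \<in> cd_units N \<and> a \<noteq> b \<and> T = {a, b, xor a b}"
  then obtain a b where ab: "a \<in> cd_units N" "b \<in> cd_units N" "a \<noteq> b" "T = {a, b, xor a b}"
    by blast
  then obtain x y z where xyz: "T = {x, y, z}" "0 < x" "x < y" "y < z" "z = xor x y"
    by (auto simp: mem_cd_units elim: sorted_triple_of_xor)
  have "z < 2 ^ N"
    using xyz(1) ab xor_less_pow[of a N b] by (auto simp: mem_cd_units)
  then show "distinguished_triple N T"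
    unfolding distinguished_triple_sorted using xyz by blast
qed

lemma sorted_triple_eq:
  fixes a b c :: "'a::linorder"
  assumes "{a, b, c} = {a', b', c'}" "a < b" "b < c" "a' < b'" "b' < c'"
  shows "a = a' \<and> b = b' \<and> c = c'"
proof -
  have mem: "a \<in> {a', b', c'}" "b \<in> {a', b', c'}" "c \<in> {a', b', c'}"
    "a' \<in> {a, b, c}" "b' \<in> {a, b, c}" "c' \<in> {a, b, c}"
    using assms(1) by blast+
  have "a = a'" "c = c'"
    using mem assms(2-5) by auto
  then show ?thesis
    using mem(2) assms(2-5) by auto
qed

definition bit_overlapping :: "nat set \<Rightarrow> bool" where
  "bit_overlapping T \<longleftrightarrow> (\<forall>x\<in>T. \<forall>y\<in>T. bitset x \<inter> bitset y \<noteq> {})"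

lemma bit_overlapping_sorted_triple:
  assumes "0 < a" "a < b" "b < c" "c = xor a b"
  shows "bit_overlapping {a, b, c} \<longleftrightarrow> a + b \<noteq> c"
proof
  assume "a + b \<noteq> c"
  then have "bitset a \<inter> bitset b \<noteq> {}"
    using assms(4) add_eq_xor_iff by blast
  moreover have "bitset a \<inter> bitset c \<noteq> {}"
  proof
    assume "bitset a \<inter> bitset c = {}"
    then have "a + c = b"
      using assms(4) by (simp add: add_eq_xor_iff[symmetric])
    then show False using assms by simp
  qed
  moreover have "bitset b \<inter> bitset c \<noteq> {}"
  proof
    assume "bitset b \<inter> bitset c = {}"
    then have "b + c = a"
      using assms(4) xor_self_right[of a b] by (simp add: add_eq_xor_iff[symmetric] xor.commute)
    then show False using assms by simp
  qed
  moreover have "bitset x \<noteq> {}" if "x \<in> {a, b, c}" for x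
    using that assms by (auto simp: bitset_empty_iff)
  ultimately show "bit_overlapping {a, b, c}"
    unfolding bit_overlapping_def by (auto simp: Int_commute)
next
  assume "bit_overlapping {a, b, c}"
  then have "bitset a \<inter> bitset b \<noteq> {}"
    by (simp add: bit_overlapping_def)
  then show "a + b \<noteq> c"
    using assms(4) add_eq_xor_iff by blast
qed

lemma defective_triple_iff:
  "defective_triple N T \<longleftrightarrow> distinguished_triple N T \<and> bit_overlapping T"
proof (cases "distinguished_triple N T")
  case True
  then obtain a b c where abc: "T = {a, b, c}" "0 < a" "a < b" "b < c" "c = xor a b"
    unfolding distinguished_triple_sorted by blast
  have "(\<exists>a' b' c'. T = {a', b', c'} \<and> a' < b' \<and> b' < c' \<and> a' + b' \<noteq> c') \<longleftrightarrow> a + b \<noteq> c"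
    using abc(1,3,4) sorted_triple_eq[of a b c] by metis
  then show ?thesis
    using True abc bit_overlapping_sorted_triple[of a b c] by (simp add: defective_triple_def)
qed (simp add: defective_triple_def)

section \<open>Counting defective triples\<close>

lemma card_less_involution:
  fixes g :: "'a::linorder \<Rightarrow> 'a"
  assumes "finite A" and closed: "\<And>x. x \<in> A \<Longrightarrow> g x \<in> A"
    and invol: "\<And>x. x \<in> A \<Longrightarrow> g (g x) = x" and no_fix: "\<And>x. x \<in> A \<Longrightarrow> g x \<noteq> x"
  shows "2 * card {x\<in>A. x < g x} = card A"
proof -
  let ?B = "{x\<in>A. x < g x}" and ?C = "{x\<in>A. g x < x}"
  have "g ` ?B = ?C"
  proof (intro equalityI subsetI)
    fix y
    assume "y \<in> g ` ?B"
    then obtain x where "x \<in> ?B" "y = g x"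
      by blast
    then show "y \<in> ?C"
      using closed invol by fastforce
  next
    fix y
    assume y: "y \<in> ?C"
    then have "g y \<in> ?B"
      using closed invol by fastforce
    moreover have "y = g (g y)"
      using y invol by simp
    ultimately show "y \<in> g ` ?B"
      by blast
  qed
  moreover have "inj_on g ?B"
    by (rule inj_onI) (metis invol mem_Collect_eq)
  ultimately have "card ?C = card ?B"
    using card_image by fastforce
  moreover have "A = ?B \<union> ?C"
    using no_fix neq_iff by blast
  moreover have "?B \<inter> ?C = {}"
    by auto
  moreover have "finite ?B" "finite ?C"
    using \<open>finite A\<close> by simp_all
  ultimately show ?thesis
    by (metis card_Un_disjoint mult_2)
qed


lemma card_bitset_Collect:
  "card {v. v < 2 ^ N \<and> P (bitset v)} = card {V. V \<subseteq> {..<N} \<and> P V}"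
proof -
  have "{V. V \<subseteq> {..<N} \<and> P V} = bitset ` {v. v < 2 ^ N \<and> P (bitset v)}"
  proof (intro equalityI subsetI)
    fix V
    assume "V \<in> {V. V \<subseteq> {..<N} \<and> P V}"
    moreover have "V \<in> bitset ` {..<2 ^ N}"
      using calculation bij_betw_imp_surj_on[OF bij_betw_bitset, of N] by auto
    then obtain v where "v < 2 ^ N" "V = bitset v"
      by blast
    ultimately show "V \<in> bitset ` {v. v < 2 ^ N \<and> P (bitset v)}"
      by blast
  qed (auto simp flip: bitset_subset_iff)
  moreover have "inj_on bitset {v. v < 2 ^ N \<and> P (bitset v)}"
    by (auto intro: inj_onI simp: bitset_eq_iff)
  ultimately show ?thesis
    by (simp add: card_image)
qed

lemma card_split_subsets:
  assumes "finite W" "U \<subseteq> W" "U \<noteq> {}"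
  shows "card {V. V \<subseteq> W \<and> V \<inter> U \<noteq> {} \<and> U - V \<noteq> {} \<and> V - U \<noteq> {}}
    = (2 ^ card U - 2) * (2 ^ (card W - card U) - 1)"
proof -
  let ?A = "Pow U - {{}, U}" and ?B = "Pow (W - U) - {{}}"
  have "bij_betw (\<lambda>V. (V \<inter> U, V - U))
      {V. V \<subseteq> W \<and> V \<inter> U \<noteq> {} \<and> U - V \<noteq> {} \<and> V - U \<noteq> {}} (?A \<times> ?B)"
    by (rule bij_betw_byWitness[where f' = "\<lambda>(A, B). A \<union> B"]) (use assms(2) in auto)
  then have "card {V. V \<subseteq> W \<and> V \<inter> U \<noteq> {} \<and> U - V \<noteq> {} \<and> V - U \<noteq> {}} = card ?A * card ?B"
    by (simp add: bij_betw_same_card card_cartesian_product)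
  moreover have "card ?A = 2 ^ card U - 2"
    using assms finite_subset[OF assms(2)] by (simp add: card_Pow card_Diff_subset)
  moreover have "card ?B = 2 ^ (card W - card U) - 1"
    using assms by (simp add: card_Pow card_Diff_subset finite_subset)
  ultimately show ?thesis by simp
qed

lemma bit_overlapping_xor_triple:
  "bit_overlapping {u, v, xor u v} \<longleftrightarrow>
     bitset v \<inter> bitset u \<noteq> {} \<and> bitset u - bitset v \<noteq> {} \<and> bitset v - bitset u \<noteq> {}"
  by (auto simp: bit_overlapping_def bitset_xor)

lemma xor_triple_through:
  fixes a b u :: nat
  assumes "u \<in> {a, b, xor a b}" "a \<noteq> b" "0 < a" "0 < b"
  obtains v where "v \<in> {a, b}" "v \<noteq> u" "{a, b, xor a b} = {u, v, xor u v}"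
proof -
  consider "u = a" | "u = b" | "u = xor a b"
    using assms(1) by blast
  then show thesis
  proof cases
    case 1
    then show thesis using that[of b] assms(2) by blast
  next
    case 2
    then show thesis using that[of a] assms(2) by (auto simp: xor.commute)
  next
    case 3
    moreover have "xor (xor a b) a = b"
      by (metis xor.commute xor_self_left)
    moreover have "xor a b \<noteq> a"
      using assms(4) by (simp add: xor_eq_left_iff)
    ultimately show thesis
      using that[of a] by (auto simp: insert_commute)
  qed
qed

lemma distinguished_triple_through:
  assumes "u \<in> cd_units N"
  shows "distinguished_triple N T \<and> u \<in> T \<longleftrightarrow> (\<exists>v\<in>cd_units N. v < xor u v \<and> T = {u, v, xor u v})"
proof
  assume "distinguished_triple N T \<and> u \<in> T"
  then obtain a b where ab: "a \<in> cd_units N" "b \<in> cd_units N" "a \<noteq> b" "T = {a, b, xor a b}" "u \<in> T"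
    by (auto simp: distinguished_triple_iff)
  obtain v where "v \<in> {a, b}" "v \<noteq> u" "{a, b, xor a b} = {u, v, xor u v}"
    by (rule xor_triple_through[of u a b]) (use ab in \<open>auto simp: mem_cd_units\<close>)
  then have v: "v \<in> cd_units N" "v \<noteq> u" "T = {u, v, xor u v}"
    using ab by auto
  then have w: "xor u v \<in> cd_units N" "xor u v \<noteq> v"
    using assms xor_less_pow[of u N v] by (auto simp: mem_cd_units xor_eq_0_iff xor_eq_right_iff)
  show "\<exists>v\<in>cd_units N. v < xor u v \<and> T = {u, v, xor u v}"
  proof (cases "v < xor u v")
    case False
    then show ?thesis
      using v w by (intro bexI[of _ "xor u v"]) auto
  qed (use v in blast)
next
  assume "\<exists>v\<in>cd_units N. v < xor u v \<and> T = {u, v, xor u v}"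
  then obtain v where "v \<in> cd_units N" "v < xor u v" "T = {u, v, xor u v}"
    by blast
  moreover then have "u \<noteq> v"
    by auto
  ultimately show "distinguished_triple N T \<and> u \<in> T"
    using assms by (auto simp: distinguished_triple_iff)
qed

lemma defective_triples_through:
  assumes "u \<in> cd_units N"
  shows "{T. defective_triple N T \<and> u \<in> T} =
    (\<lambda>v. {u, v, xor u v}) ` {v \<in> cd_units N. bit_overlapping {u, v, xor u v} \<and> v < xor u v}"
proof (intro equalityI subsetI)
  fix T
  assume "T \<in> {T. defective_triple N T \<and> u \<in> T}"
  then have T: "distinguished_triple N T \<and> u \<in> T" "bit_overlapping T"
    by (simp_all add: defective_triple_iff)
  then obtain v where "v \<in> cd_units N" "v < xor u v" "T = {u, v, xor u v}"
    using distinguished_triple_through[OF assms] by blast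
  with T(2) show "T \<in> (\<lambda>v. {u, v, xor u v}) ` {v \<in> cd_units N. bit_overlapping {u, v, xor u v} \<and> v < xor u v}"
    by blast
next
  fix T
  assume "T \<in> (\<lambda>v. {u, v, xor u v}) ` {v \<in> cd_units N. bit_overlapping {u, v, xor u v} \<and> v < xor u v}"
  then show "T \<in> {T. defective_triple N T \<and> u \<in> T}"
    using distinguished_triple_through[OF assms] by (auto simp: defective_triple_iff)
qed

lemma inj_on_xor_triple: "inj_on (\<lambda>v. {u, v, xor u v}) {v. v < xor u (v::nat)}"
proof (rule inj_onI)
  fix v w :: nat
  assume v: "v \<in> {v. v < xor u v}" and w: "w \<in> {v. v < xor u v}"
    and eq: "{u, v, xor u v} = {u, w, xor u w}"
  have "w \<in> {u, v, xor u v}" "w \<noteq> u"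
    using eq w by auto
  moreover have "w \<noteq> xor u v"
  proof
    assume "w = xor u v"
    then have "xor u w = v"
      by simp
    then show False
      using v w \<open>w = xor u v\<close> by simp
  qed
  ultimately show "v = w"
    by blast
qed

lemma card_overlapping_partners:
  assumes "u \<in> cd_units N"
  shows "card {v \<in> cd_units N. bit_overlapping {u, v, xor u v}} =
    (2 ^ card (bitset u) - 2) * (2 ^ (N - card (bitset u)) - 1)"
proof -
  let ?U = "bitset u"
  have U: "?U \<subseteq> {..<N}" "?U \<noteq> {}"
    using assms by (auto simp: mem_cd_units bitset_subset_iff bitset_empty_iff)
  have "{v \<in> cd_units N. bit_overlapping {u, v, xor u v}} =
      {v. v < 2 ^ N \<and> bitset v \<inter> ?U \<noteq> {} \<and> ?U - bitset v \<noteq> {} \<and> bitset v - ?U \<noteq> {}}"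
    by (auto simp: mem_cd_units bit_overlapping_xor_triple intro!: Nat.gr0I)
  then show ?thesis
    using card_bitset_Collect[of N "\<lambda>V. V \<inter> ?U \<noteq> {} \<and> ?U - V \<noteq> {} \<and> V - ?U \<noteq> {}"]
      card_split_subsets[of "{..<N}" ?U] U by simp
qed

lemma card_overlapping_partners_below:
  assumes "u \<in> cd_units N"
  shows "2 * card {v \<in> cd_units N. bit_overlapping {u, v, xor u v} \<and> v < xor u v} =
    card {v \<in> cd_units N. bit_overlapping {u, v, xor u v}}"
proof -
  let ?G = "{v \<in> cd_units N. bit_overlapping {u, v, xor u v}}"
  have "2 * card {v \<in> ?G. v < xor u v} = card ?G"
  proof (rule card_less_involution)
    show "xor u v \<in> ?G" if "v \<in> ?G" for v
    proof -
      have "xor u v \<noteq> 0"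
        using that by (auto simp: xor_eq_0_iff bit_overlapping_xor_triple)
      then show ?thesis
        using that assms xor_less_pow[of u N v] by (auto simp: mem_cd_units insert_commute)
    qed
    show "xor u v \<noteq> v" if "v \<in> ?G" for v
      using assms by (simp add: xor_eq_right_iff mem_cd_units)
  qed (simp_all add: cd_units_def)
  then show ?thesis
    by simp
qed

theorem defect_count_eq:
  assumes "u \<in> cd_units N"
  shows "defect_count N u = (2 ^ card (bitset u) - 2) * (2 ^ (N - card (bitset u)) - 1) div 2"
proof -
  have "defect_count N u = card {v \<in> cd_units N. bit_overlapping {u, v, xor u v} \<and> v < xor u v}"
    unfolding defect_count_def defective_triples_through[OF assms]
    by (rule card_image) (rule inj_on_subset[OF inj_on_xor_triple], blast)
  then have "2 * defect_count N u = (2 ^ card (bitset u) - 2) * (2 ^ (N - card (bitset u)) - 1)"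
    using card_overlapping_partners_below[OF assms] card_overlapping_partners[OF assms] by simp
  then show ?thesis
    by (metis nonzero_mult_div_cancel_left zero_neq_numeral)
qed

lemma card_bitset_unit:
  assumes "u \<in> cd_units N"
  shows "1 \<le> card (bitset u)" "card (bitset u) \<le> N"
proof -
  have "bitset u \<subseteq> {..<N}" "bitset u \<noteq> {}"
    using assms by (auto simp: mem_cd_units bitset_subset_iff bitset_empty_iff)
  then show "1 \<le> card (bitset u)" "card (bitset u) \<le> N"
    using card_mono[of "{..<N}" "bitset u"] by (auto simp: Suc_le_eq card_gt_0_iff finite_subset)
qed

lemma card_subsets_of_two_cards:
  assumes "finite A" "a \<noteq> b"
  shows "card {V. V \<subseteq> A \<and> card V \<in> {a, b}} = (card A choose a) + (card A choose b)"
proof -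
  have "{V. V \<subseteq> A \<and> card V \<in> {a, b}} = {V. V \<subseteq> A \<and> card V = a} \<union> {V. V \<subseteq> A \<and> card V = b}"
    by blast
  moreover have "finite {V. V \<subseteq> A \<and> card V = c}" for c
    using assms(1) by (auto intro: rev_finite_subset[of "Pow A"])
  moreover have "card ({V. V \<subseteq> A \<and> card V = a} \<union> {V. V \<subseteq> A \<and> card V = b}) =
      card {V. V \<subseteq> A \<and> card V = a} + card {V. V \<subseteq> A \<and> card V = b}"
    by (rule card_Un_disjoint) (use calculation assms(2) in auto)
  ultimately show ?thesis
    using assms(1) by (simp add: n_subsets)
qed

lemma card_units_of_weights:
  assumes "0 < a" "0 < b" "a \<noteq> b"
  shows "card {u \<in> cd_units N. card (bitset u) \<in> {a, b}} = (N choose a) + (N choose b)"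
proof -
  have "{u \<in> cd_units N. card (bitset u) \<in> {a, b}} = {v. v < 2 ^ N \<and> card (bitset v) \<in> {a, b}}"
    using assms by (auto simp: mem_cd_units intro!: Nat.gr0I)
  then show ?thesis
    using card_bitset_Collect[of N "\<lambda>V. card V \<in> {a, b}"] card_subsets_of_two_cards[of "{..<N}" a b] assms
    by simp
qed

section \<open>The combinatorial Grassmannian on a set\<close>

definition grass_points :: "'a set \<Rightarrow> 'a set set" where
  "grass_points S = {P. P \<subseteq> S \<and> card P = 2}"

definition grass_lines :: "'a set \<Rightarrow> 'a set set set" where
  "grass_lines S = grass_points ` {T. T \<subseteq> S \<and> card T = 3}"

lemma grass_points_mono: "T \<subseteq> S \<Longrightarrow> grass_points T \<subseteq> grass_points S"
  by (auto simp: grass_points_def)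

lemma mem_grass_points: "P \<in> grass_points S \<longleftrightarrow> (\<exists>i j. P = {i, j} \<and> i \<noteq> j \<and> i \<in> S \<and> j \<in> S)"
  by (auto simp: grass_points_def card_2_iff)

lemma doubleton_mem_grass_points: "i \<noteq> j \<Longrightarrow> i \<in> S \<Longrightarrow> j \<in> S \<Longrightarrow> {i, j} \<in> grass_points S"
  by (simp add: grass_points_def)

lemma grass_points_triple:
  assumes "a \<noteq> b" "b \<noteq> c" "a \<noteq> c"
  shows "grass_points {a, b, c} = {{a, b}, {b, c}, {a, c}}"
proof (intro equalityI subsetI)
  fix P
  assume "P \<in> grass_points {a, b, c}"
  then obtain x y where "P = {x, y}" "x \<noteq> y" "{x, y} \<subseteq> {a, b, c}"
    by (auto simp: mem_grass_points)
  then show "P \<in> {{a, b}, {b, c}, {a, c}}"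
    by (auto simp: insert_commute)
qed (use assms in \<open>auto simp: grass_points_def\<close>)

lemma card_grass_points: "finite S \<Longrightarrow> card (grass_points S) = card S choose 2"
  unfolding grass_points_def by (rule n_subsets)

lemma Union_grass_points: "card T = 3 \<Longrightarrow> \<Union> (grass_points T) = T"
  by (auto simp: card_3_iff grass_points_triple)

lemma grass_lines_cases:
  assumes "l \<in> grass_lines S"
  obtains a b c where "a \<noteq> b" "b \<noteq> c" "a \<noteq> c" "{a, b, c} \<subseteq> S" "l = grass_points {a, b, c}"
  using assms unfolding grass_lines_def by (auto simp: card_3_iff)

lemma grass_lines_intro:
  "a \<noteq> b \<Longrightarrow> b \<noteq> c \<Longrightarrow> a \<noteq> c \<Longrightarrow> {a, b, c} \<subseteq> S \<Longrightarrow> grass_points {a, b, c} \<in> grass_lines S"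
  unfolding grass_lines_def by (rule imageI) auto

lemma grass_lines_subset: "l \<in> grass_lines S \<Longrightarrow> l \<subseteq> grass_points S"
  by (auto simp: grass_lines_def intro: grass_points_mono[THEN subsetD])

lemma grass_lines_within:
  assumes "S' \<subseteq> S"
  shows "{m \<in> grass_lines S. m \<subseteq> grass_points S'} = grass_lines S'"
proof (intro equalityI subsetI)
  fix m
  assume m: "m \<in> {m \<in> grass_lines S. m \<subseteq> grass_points S'}"
  then obtain a b c where abc: "a \<noteq> b" "b \<noteq> c" "a \<noteq> c" "m = grass_points {a, b, c}"
    by (auto elim: grass_lines_cases)
  then have "{a, b} \<in> grass_points S'" "{b, c} \<in> grass_points S'"
    using m grass_points_triple[OF abc(1-3)] by auto
  then have "{a, b, c} \<subseteq> S'"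
    by (auto simp: grass_points_def)
  then show "m \<in> grass_lines S'"
    using abc by (auto intro: grass_lines_intro)
qed (use assms in \<open>auto simp: grass_lines_def intro: grass_points_mono[THEN subsetD]\<close>)

lemma inj_on_image_subset_iff:
  "inj_on f C \<Longrightarrow> A \<subseteq> C \<Longrightarrow> B \<subseteq> C \<Longrightarrow> f ` A \<subseteq> f ` B \<longleftrightarrow> A \<subseteq> B"
  by (metis inj_on_image_Int inf.absorb_iff1 inj_on_image_eq_iff inf.coboundedI1)

lemma image_subsets_of_card:
  assumes "bij_betw h A B"
  shows "bij_betw (image h) {P. P \<subseteq> A \<and> card P = n} {P. P \<subseteq> B \<and> card P = n}"
proof -
  have inj: "inj_on h A" and im: "h ` A = B"
    using assms by (auto simp: bij_betw_def)
  have "inj_on (image h) {P. P \<subseteq> A \<and> card P = n}"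
    using inj_on_image_Pow[OF inj] by (rule inj_on_subset) auto
  moreover have "image h ` {P. P \<subseteq> A \<and> card P = n} = {P. P \<subseteq> B \<and> card P = n}"
  proof (intro equalityI subsetI)
    fix Q
    assume Q: "Q \<in> {P. P \<subseteq> B \<and> card P = n}"
    define P where "P = A \<inter> h -` Q"
    have "h ` P = Q"
      using Q im unfolding P_def by auto
    moreover have "card P = n"
      using Q card_image[OF inj_on_subset[OF inj], of P] \<open>h ` P = Q\<close> by (auto simp: P_def)
    ultimately show "Q \<in> image h ` {P. P \<subseteq> A \<and> card P = n}"
      by (auto simp: P_def)
  qed (use im inj in \<open>auto simp: card_image[OF inj_on_subset[OF inj]]\<close>)
  ultimately show ?thesis
    by (simp add: bij_betw_def)
qed

lemma isomorphic_to_G2_grass: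
  assumes "finite S"
  shows "isomorphic_to_G2 (grass_points S) (grass_lines S) (\<in>) (card S)"
proof -
  obtain h where h: "bij_betw h S {1..card S}"
    using bij_betw_iff_card[OF assms, of "{1..card S}"] by auto
  have points: "bij_betw (image h) (grass_points S) (G2_points (card S))"
    unfolding grass_points_def G2_points_def by (rule image_subsets_of_card[OF h])
  have triples: "bij_betw (image h) {T. T \<subseteq> S \<and> card T = 3} (G2_lines (card S))"
    unfolding G2_lines_def by (rule image_subsets_of_card[OF h])
  define g where "g m = h ` \<Union> m" for m :: "'a set set"
  have g: "g (grass_points T) = h ` T" if "card T = 3" for T
    using Union_grass_points[OF that] by (simp add: g_def)
  have "bij_betw g (grass_lines S) (G2_lines (card S))"
    unfolding grass_lines_def
  proof (rule bij_betw_imageI)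
    show "inj_on g (grass_points ` {T. T \<subseteq> S \<and> card T = 3})"
      using triples g by (auto intro!: inj_onI simp: bij_betw_def inj_on_def)
    have "g ` grass_points ` {T. T \<subseteq> S \<and> card T = 3} = image h ` {T. T \<subseteq> S \<and> card T = 3}"
      unfolding image_image using g by (intro image_cong) auto
    then show "g ` grass_points ` {T. T \<subseteq> S \<and> card T = 3} = G2_lines (card S)"
      using triples by (simp add: bij_betw_def)
  qed
  moreover have "P \<in> l \<longleftrightarrow> h ` P \<subseteq> g l"
    if P: "P \<in> grass_points S" and l: "l \<in> grass_lines S" for P l
  proof -
    obtain T where T: "T \<subseteq> S" "card T = 3" "l = grass_points T"
      using l by (auto simp: grass_lines_def)
    have "P \<in> l \<longleftrightarrow> P \<subseteq> T"
      using P T by (auto simp: grass_points_def)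
    also have "\<dots> \<longleftrightarrow> h ` P \<subseteq> h ` T"
      using P T h by (auto simp: grass_points_def bij_betw_def inj_on_image_subset_iff)
    finally show ?thesis
      using g T by simp
  qed
  ultimately show ?thesis
    unfolding isomorphic_to_G2_def isomorphic_inc_def using points by blast
qed

lemma inj_on_grass_points: "inj_on grass_points {T. card T = 3}"
  by (rule inj_onI) (metis Union_grass_points mem_Collect_eq)

lemma card_grass_lines: "finite S \<Longrightarrow> card (grass_lines S) = card S choose 3"
  unfolding grass_lines_def
  by (subst card_image) (auto intro: inj_on_subset[OF inj_on_grass_points] simp: n_subsets)

lemma triples_through_pair:
  assumes "P \<in> grass_points S"
  shows "{T. T \<subseteq> S \<and> card T = 3 \<and> P \<subseteq> T} = (\<lambda>k. insert k P) ` (S - P)"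
proof -
  have P: "P \<subseteq> S" "card P = 2" "finite P"
    using assms by (auto simp: grass_points_def intro: card_ge_0_finite)
  show ?thesis
  proof (intro equalityI subsetI)
    fix T
    assume T: "T \<in> {T. T \<subseteq> S \<and> card T = 3 \<and> P \<subseteq> T}"
    then have "card (T - P) = 1"
      using P by (simp add: card_Diff_subset)
    then obtain k where "T - P = {k}"
      by (auto simp: card_Suc_eq)
    then show "T \<in> (\<lambda>k. insert k P) ` (S - P)"
      using T by (auto intro!: image_eqI[of _ _ k])
  qed (use P in auto)
qed

lemma card_points_on_grass_line:
  assumes "l \<in> grass_lines S"
  shows "card {p \<in> grass_points S. p \<in> l} = 3"
proof -
  obtain a b c where abc: "a \<noteq> b" "b \<noteq> c" "a \<noteq> c" "{a, b, c} \<subseteq> S" "l = grass_points {a, b, c}"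
    using assms by (rule grass_lines_cases)
  have "{p \<in> grass_points S. p \<in> l} = l"
    using grass_lines_subset[OF assms] by blast
  then show ?thesis
    using abc by (simp add: grass_points_triple doubleton_eq_iff)
qed

lemma card_grass_lines_through:
  assumes "finite S" "P \<in> grass_points S"
  shows "card {l \<in> grass_lines S. P \<in> l} = card S - 2"
proof -
  have "{l \<in> grass_lines S. P \<in> l} = grass_points ` {T. T \<subseteq> S \<and> card T = 3 \<and> P \<subseteq> T}"
    using assms(2) by (auto simp: grass_lines_def grass_points_def)
  then have lines: "{l \<in> grass_lines S. P \<in> l} = grass_points ` (\<lambda>k. insert k P) ` (S - P)"
    unfolding triples_through_pair[OF assms(2)] .
  have "inj_on grass_points ((\<lambda>k. insert k P) ` (S - P))"
    using inj_on_grass_points by (rule inj_on_subset) (use triples_through_pair[OF assms(2)] in blast)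
  moreover have "inj_on (\<lambda>k. insert k P) (S - P)"
    by (auto intro: inj_onI simp: insert_ident)
  ultimately have "card {l \<in> grass_lines S. P \<in> l} = card (S - P)"
    unfolding lines by (simp add: card_image)
  moreover have "finite P" "P \<subseteq> S" "card P = 2"
    using assms by (auto simp: grass_points_def intro: finite_subset)
  ultimately show ?thesis
    by (simp add: card_Diff_subset)
qed

lemma grass_line_through_two:
  assumes "l \<in> grass_lines S" "P \<in> l" "Q \<in> l" "P \<noteq> Q"
  shows "l = grass_points (P \<union> Q)"
proof -
  obtain T where T: "T \<subseteq> S" "card T = 3" "l = grass_points T"
    using assms(1) by (auto simp: grass_lines_def)
  have PQ: "P \<subseteq> T" "Q \<subseteq> T" "card P = 2" "card Q = 2" "finite T"
    using assms T by (auto simp: grass_points_def intro: card_ge_0_finite)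
  then have "\<not> Q \<subseteq> P"
    using assms(4) by (metis card_subset_eq finite_subset)
  then have "card P < card (P \<union> Q)"
    using PQ by (intro psubset_card_mono) (auto intro: finite_subset)
  moreover have "card (P \<union> Q) \<le> card T"
    using PQ by (intro card_mono) auto
  ultimately have "P \<union> Q = T"
    using PQ T by (intro card_subset_eq) auto
  then show ?thesis
    using T by simp
qed

lemma configuration_grass:
  assumes "finite S"
  shows "configuration (grass_points S) (grass_lines S) (\<in>) (card S choose 2) (card S - 2) (card S choose 3) 3"
proof -
  have "finite (grass_points S)" "finite (grass_lines S)"
    using assms by (auto simp: grass_points_def grass_lines_def intro: rev_finite_subset[of "Pow S"])
  moreover have "card {l \<in> grass_lines S. P \<in> l \<and> Q \<in> l} \<le> 1" if "P \<noteq> Q" for P Q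
  proof -
    have "{l \<in> grass_lines S. P \<in> l \<and> Q \<in> l} \<subseteq> {grass_points (P \<union> Q)}"
      using grass_line_through_two that by blast
    then show ?thesis
      using card_mono[of "{grass_points (P \<union> Q)}"] by fastforce
  qed
  ultimately show ?thesis
    using assms card_points_on_grass_line[of _ S] card_grass_lines_through[OF assms]
    by (simp add: configuration_def card_grass_points card_grass_lines)
qed
lemma grass_points_meet:
  assumes "P \<in> grass_points S" "Q \<in> grass_points S" "P \<noteq> Q" "P \<inter> Q \<noteq> {}"
  obtains a b c where "P = {a, b}" "Q = {b, c}" "a \<noteq> b" "b \<noteq> c" "a \<noteq> c" "{a, b, c} \<subseteq> S"
proof -
  obtain b where b: "b \<in> P" "b \<in> Q"
    using assms(4) by blast
  obtain a where a: "P = {a, b}" "a \<noteq> b"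
    using assms(1) b(1) by (auto simp: mem_grass_points)
  obtain c where c: "Q = {b, c}" "b \<noteq> c"
    using assms(2) b(2) by (auto simp: mem_grass_points insert_commute)
  show thesis
    using that[OF a(1) c(1) a(2) c(2)] a c assms(1-3) by (auto simp: grass_points_def)
qed

lemma collinear_grass:
  assumes "3 \<le> card S" "p \<in> grass_points S" "q \<in> grass_points S"
  shows "collinear (grass_lines S) (\<in>) p q \<longleftrightarrow> p \<inter> q \<noteq> {}"
proof
  assume "collinear (grass_lines S) (\<in>) p q"
  then obtain l where l: "l \<in> grass_lines S" "p \<in> l" "q \<in> l"
    by (auto simp: collinear_def)
  then obtain a b c where abc: "a \<noteq> b" "b \<noteq> c" "a \<noteq> c" "l = grass_points {a, b, c}"
    by (auto elim: grass_lines_cases)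
  then show "p \<inter> q \<noteq> {}"
    using l by (auto simp: grass_points_triple)
next
  assume pq: "p \<inter> q \<noteq> {}"
  have fin: "finite S"
    using assms(1) card_ge_0_finite by force
  have p: "card p = 2" "p \<subseteq> S" and q: "card q = 2" "q \<subseteq> S"
    using assms by (auto simp: grass_points_def)
  obtain T where T: "p \<union> q \<subseteq> T" "T \<subseteq> S" "card T = 3"
  proof (cases "p = q")
    case True
    have "card (S - p) \<noteq> 0"
      using p assms(1) fin by (simp add: card_Diff_subset finite_subset)
    then obtain k where "k \<in> S" "k \<notin> p"
      by (metis Diff_iff card.empty ex_in_conv)
    then show thesis
      by (intro that[of "insert k p"]) (use True p fin in \<open>auto simp: finite_subset\<close>)
  next
    case False
    then obtain x y z where "p = {x, y}" "q = {x, z}" "x \<noteq> y" "x \<noteq> z" "y \<noteq> z"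
      using pq p q by (auto simp: card_2_iff doubleton_eq_iff)
    then show thesis
      by (intro that[of "p \<union> q"]) (use p q in \<open>auto simp: insert_commute\<close>)
  qed
  then have "grass_points T \<in> grass_lines S" "p \<in> grass_points T" "q \<in> grass_points T"
    using p q by (auto simp: grass_lines_def grass_points_def)
  then show "collinear (grass_lines S) (\<in>) p q"
    by (auto simp: collinear_def)
qed

definition split_hyperplane :: "'a set \<Rightarrow> 'a set \<Rightarrow> 'a set set" where
  "split_hyperplane S X = grass_points (S \<inter> X) \<union> grass_points (S - X)"

lemma grass_points_subset_eqI:
  assumes "A \<subseteq> grass_points S" "B \<subseteq> grass_points S"
    and "\<And>i j. i \<noteq> j \<Longrightarrow> i \<in> S \<Longrightarrow> j \<in> S \<Longrightarrow> {i, j} \<in> A \<longleftrightarrow> {i, j} \<in> B"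
  shows "A = B"
proof (intro equalityI subsetI)
  fix P
  assume "P \<in> A"
  then have "P \<in> grass_points S"
    using assms(1) by blast
  then obtain i j where "P = {i, j}" "i \<noteq> j" "i \<in> S" "j \<in> S"
    unfolding mem_grass_points by blast
  then show "P \<in> B"
    using assms(3) \<open>P \<in> A\<close> by blast
next
  fix P
  assume "P \<in> B"
  then have "P \<in> grass_points S"
    using assms(2) by blast
  then obtain i j where "P = {i, j}" "i \<noteq> j" "i \<in> S" "j \<in> S"
    unfolding mem_grass_points by blast
  then show "P \<in> A"
    using assms(3) \<open>P \<in> B\<close> by blast
qed

lemma split_hyperplane_subset: "split_hyperplane S X \<subseteq> grass_points S"
  by (auto simp: split_hyperplane_def grass_points_def)

lemma mem_split_hyperplane:
  "i \<noteq> j \<Longrightarrow> i \<in> S \<Longrightarrow> j \<in> S \<Longrightarrow> {i, j} \<in> split_hyperplane S X \<longleftrightarrow> (i \<in> X \<longleftrightarrow> j \<in> X)"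
  by (auto simp: split_hyperplane_def grass_points_def)

lemma split_hyperplane_Diff: "split_hyperplane S (S - X) = split_hyperplane S X"
proof -
  have "S \<inter> (S - X) = S - X" "S - (S - X) = S \<inter> X"
    by auto
  then show ?thesis
    by (simp add: split_hyperplane_def Un_commute)
qed

lemma grass_points_disjoint: "A \<inter> B = {} \<Longrightarrow> grass_points A \<inter> grass_points B = {}"
proof (rule equals0I)
  fix P
  assume "A \<inter> B = {}" "P \<in> grass_points A \<inter> grass_points B"
  then have "P = {}" "card P = 2"
    by (auto simp: grass_points_def)
  then show False
    by simp
qed

lemma card_split_hyperplane:
  assumes "finite S"
  shows "card (split_hyperplane S X) = (card (S \<inter> X) choose 2) + (card (S - X) choose 2)"
proof -
  have "grass_points (S \<inter> X) \<inter> grass_points (S - X) = {}"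
    by (rule grass_points_disjoint) blast
  moreover have "finite (grass_points T)" if "T \<subseteq> S" for T
    using assms that by (auto simp: grass_points_def intro: rev_finite_subset[of "Pow S"])
  ultimately show ?thesis
    using assms unfolding split_hyperplane_def
    by (subst card_Un_disjoint) (auto simp: card_grass_points)
qed

lemma meets_triple_iff:
  assumes "x \<noteq> y" "y \<noteq> z" "x \<noteq> z"
  shows "{x, y, z} \<subseteq> H \<or> card ({x, y, z} \<inter> H) = 1 \<longleftrightarrow> (x \<in> H \<longleftrightarrow> (y \<in> H \<longleftrightarrow> z \<in> H))"
  using assms by (cases "x \<in> H"; cases "y \<in> H"; cases "z \<in> H") (auto simp: Int_insert_left)

lemma geometric_hyperplane_grass_iff:
  "geometric_hyperplane (grass_points S) (grass_lines S) (\<in>) H \<longleftrightarrow> H \<subset> grass_points S \<and>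
     (\<forall>a b c. a \<noteq> b \<longrightarrow> b \<noteq> c \<longrightarrow> a \<noteq> c \<longrightarrow> {a, b, c} \<subseteq> S \<longrightarrow>
        ({a, b} \<in> H \<longleftrightarrow> ({b, c} \<in> H \<longleftrightarrow> {a, c} \<in> H)))"
proof -
  have triple: "{p \<in> grass_points S. p \<in> grass_points {a, b, c}} \<subseteq> H \<or>
        card {p \<in> grass_points S. p \<in> grass_points {a, b, c} \<and> p \<in> H} = 1 \<longleftrightarrow>
        ({a, b} \<in> H \<longleftrightarrow> ({b, c} \<in> H \<longleftrightarrow> {a, c} \<in> H))"
    if "a \<noteq> b" "b \<noteq> c" "a \<noteq> c" "{a, b, c} \<subseteq> S" for a b c
  proof -
    have "grass_points {a, b, c} \<subseteq> grass_points S"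
      using that(4) by (rule grass_points_mono)
    then have "{p \<in> grass_points S. p \<in> grass_points {a, b, c}} = {{a, b}, {b, c}, {a, c}}"
      "{p \<in> grass_points S. p \<in> grass_points {a, b, c} \<and> p \<in> H} = {{a, b}, {b, c}, {a, c}} \<inter> H"
      using grass_points_triple[OF that(1-3)] by auto
    moreover have "{a, b} \<noteq> {b, c}" "{b, c} \<noteq> {a, c}" "{a, b} \<noteq> {a, c}"
      using that(1-3) by (auto simp: doubleton_eq_iff)
    ultimately show ?thesis
      using meets_triple_iff[of "{a, b}" "{b, c}" "{a, c}" H] by simp
  qed
  have "(\<forall>l\<in>grass_lines S. {p \<in> grass_points S. p \<in> l} \<subseteq> H \<or> card {p \<in> grass_points S. p \<in> l \<and> p \<in> H} = 1)
    \<longleftrightarrow> (\<forall>a b c. a \<noteq> b \<longrightarrow> b \<noteq> c \<longrightarrow> a \<noteq> c \<longrightarrow> {a, b, c} \<subseteq> S \<longrightarrow>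
        ({a, b} \<in> H \<longleftrightarrow> ({b, c} \<in> H \<longleftrightarrow> {a, c} \<in> H)))"
  proof (rule iffI; intro allI impI ballI)
    fix a b c
    assume "\<forall>l\<in>grass_lines S. {p \<in> grass_points S. p \<in> l} \<subseteq> H \<or> card {p \<in> grass_points S. p \<in> l \<and> p \<in> H} = 1"
      and abc: "a \<noteq> b" "b \<noteq> c" "a \<noteq> c" "{a, b, c} \<subseteq> S"
    then show "{a, b} \<in> H \<longleftrightarrow> ({b, c} \<in> H \<longleftrightarrow> {a, c} \<in> H)"
      using triple[OF abc] grass_lines_intro[OF abc] by blast
  next
    fix l
    assume "\<forall>a b c. a \<noteq> b \<longrightarrow> b \<noteq> c \<longrightarrow> a \<noteq> c \<longrightarrow> {a, b, c} \<subseteq> S \<longrightarrow>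
        ({a, b} \<in> H \<longleftrightarrow> ({b, c} \<in> H \<longleftrightarrow> {a, c} \<in> H))"
      and "l \<in> grass_lines S"
    then show "{p \<in> grass_points S. p \<in> l} \<subseteq> H \<or> card {p \<in> grass_points S. p \<in> l \<and> p \<in> H} = 1"
      using triple by (elim grass_lines_cases) blast
  qed
  then show ?thesis
    unfolding geometric_hyperplane_def by blast
qed

lemma split_hyperplane_is_hyperplane:
  assumes "s \<in> S" "X \<subseteq> S - {s}" "X \<noteq> {}"
  shows "geometric_hyperplane (grass_points S) (grass_lines S) (\<in>) (split_hyperplane S X)"
proof -
  obtain x where x: "x \<in> X"
    using assms(3) by blast
  then have "{s, x} \<in> grass_points S - split_hyperplane S X"
    using assms(1,2) x mem_split_hyperplane[of s x S X] doubleton_mem_grass_points[of s x S] by blast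
  then have "split_hyperplane S X \<subset> grass_points S"
    using split_hyperplane_subset by blast
  then show ?thesis
    unfolding geometric_hyperplane_grass_iff by (auto simp: mem_split_hyperplane)
qed

lemma hyperplane_is_split_hyperplane:
  assumes "s \<in> S" and H: "geometric_hyperplane (grass_points S) (grass_lines S) (\<in>) H"
  obtains X where "X \<subseteq> S - {s}" "X \<noteq> {}" "H = split_hyperplane S X"
proof -
  have proper: "H \<subset> grass_points S"
    and parity: "\<And>a b c. a \<noteq> b \<Longrightarrow> b \<noteq> c \<Longrightarrow> a \<noteq> c \<Longrightarrow> {a, b, c} \<subseteq> S \<Longrightarrow>
        ({a, b} \<in> H \<longleftrightarrow> ({b, c} \<in> H \<longleftrightarrow> {a, c} \<in> H))"
    using H unfolding geometric_hyperplane_grass_iff by blast+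
  define X where "X = {i \<in> S - {s}. {s, i} \<notin> H}"
  have "{i, j} \<in> H \<longleftrightarrow> {i, j} \<in> split_hyperplane S X" if "i \<noteq> j" "i \<in> S" "j \<in> S" for i j
  proof -
    consider "i = s" | "j = s" | "i \<noteq> s" "j \<noteq> s"
      by blast
    then show ?thesis
    proof cases
      case 3
      then show ?thesis
        using parity[of s i j] that assms(1) by (auto simp: X_def mem_split_hyperplane)
    qed (use that in \<open>auto simp: X_def mem_split_hyperplane insert_commute\<close>)
  qed
  then have HX: "H = split_hyperplane S X"
    using proper split_hyperplane_subset[of S X] by (intro grass_points_subset_eqI[of _ S]) auto
  moreover have "split_hyperplane S {} = grass_points S"
    by (auto simp: split_hyperplane_def grass_points_def)
  then have "X \<noteq> {}"
    using proper HX by auto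
  ultimately show thesis
    by (intro that[of X]) (auto simp: X_def)
qed

lemma hyperplanes_grass:
  assumes "s \<in> S"
  shows "hyperplanes (grass_points S) (grass_lines S) (\<in>) = split_hyperplane S ` {X. X \<subseteq> S - {s} \<and> X \<noteq> {}}"
  unfolding hyperplanes_def
  using split_hyperplane_is_hyperplane[OF assms] hyperplane_is_split_hyperplane[OF assms] by blast

lemma inj_on_split_hyperplane:
  assumes "s \<in> S"
  shows "inj_on (split_hyperplane S) (Pow (S - {s}))"
proof (rule inj_onI)
  fix X Y
  assume XY: "X \<in> Pow (S - {s})" "Y \<in> Pow (S - {s})" "split_hyperplane S X = split_hyperplane S Y"
  have "i \<in> X \<longleftrightarrow> i \<in> Y" for i
  proof (cases "i \<in> S - {s}")
    case True
    then show ?thesis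
      using XY assms mem_split_hyperplane[of s i S X] mem_split_hyperplane[of s i S Y] by auto
  qed (use XY in auto)
  then show "X = Y"
    by blast
qed

lemma split_hyperplane_Int_eq_iff:
  "split_hyperplane S A \<inter> split_hyperplane S B = split_hyperplane S C \<inter> split_hyperplane S D \<longleftrightarrow>
    (\<forall>i\<in>S. \<forall>j\<in>S. i \<noteq> j \<longrightarrow>
      ((i \<in> A \<longleftrightarrow> j \<in> A) \<and> (i \<in> B \<longleftrightarrow> j \<in> B) \<longleftrightarrow> (i \<in> C \<longleftrightarrow> j \<in> C) \<and> (i \<in> D \<longleftrightarrow> j \<in> D)))"
    (is "?lhs \<longleftrightarrow> ?rhs")
proof
  assume ?lhs
  show ?rhs
  proof (intro ballI impI)
    fix i j
    assume ij: "i \<in> S" "j \<in> S" "i \<noteq> j"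
    then show "(i \<in> A \<longleftrightarrow> j \<in> A) \<and> (i \<in> B \<longleftrightarrow> j \<in> B) \<longleftrightarrow> (i \<in> C \<longleftrightarrow> j \<in> C) \<and> (i \<in> D \<longleftrightarrow> j \<in> D)"
      using \<open>?lhs\<close> mem_split_hyperplane[of i j S] by (metis Int_iff)
  qed
next
  assume ?rhs
  then show ?lhs
    using split_hyperplane_subset[of S]
    by (intro grass_points_subset_eqI[of _ S]) (auto simp: mem_split_hyperplane)
qed

lemma veldkamp_condition_grass:
  assumes "s \<in> S" "X \<subseteq> S - {s}" "Y \<subseteq> S - {s}" "Z \<subseteq> S - {s}" "X \<noteq> Y"
  shows "split_hyperplane S X \<inter> split_hyperplane S Y = split_hyperplane S X \<inter> split_hyperplane S Z \<and>
         split_hyperplane S X \<inter> split_hyperplane S Z = split_hyperplane S Y \<inter> split_hyperplane S Z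
         \<longleftrightarrow> Z = sym_diff X Y"
proof
  assume "split_hyperplane S X \<inter> split_hyperplane S Y = split_hyperplane S X \<inter> split_hyperplane S Z \<and>
          split_hyperplane S X \<inter> split_hyperplane S Z = split_hyperplane S Y \<inter> split_hyperplane S Z"
  then have c1: "\<And>i j. i \<in> S \<Longrightarrow> j \<in> S \<Longrightarrow> i \<noteq> j \<Longrightarrow>
      (i \<in> X \<longleftrightarrow> j \<in> X) \<and> (i \<in> Y \<longleftrightarrow> j \<in> Y) \<longleftrightarrow> (i \<in> X \<longleftrightarrow> j \<in> X) \<and> (i \<in> Z \<longleftrightarrow> j \<in> Z)"
    and c2: "\<And>i j. i \<in> S \<Longrightarrow> j \<in> S \<Longrightarrow> i \<noteq> j \<Longrightarrow>
      (i \<in> X \<longleftrightarrow> j \<in> X) \<and> (i \<in> Z \<longleftrightarrow> j \<in> Z) \<longleftrightarrow> (i \<in> Y \<longleftrightarrow> j \<in> Y) \<and> (i \<in> Z \<longleftrightarrow> j \<in> Z)"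
    unfolding split_hyperplane_Int_eq_iff by blast+
  have s: "s \<notin> X" "s \<notin> Y" "s \<notin> Z"
    using assms by auto
  obtain k where k: "k \<in> S - {s}" "k \<in> X \<longleftrightarrow> k \<notin> Y"
    using assms(2,3,5) by blast
  have "i \<in> Z \<longleftrightarrow> i \<in> sym_diff X Y" for i
  proof (cases "i \<in> S - {s}")
    case False
    then show ?thesis using assms by auto
  next
    case i: True
    have "k \<in> Z \<longleftrightarrow> k \<in> sym_diff X Y"
      using c1[of s k] c2[of s k] k s assms(1) by auto
    moreover have "i \<in> Z \<longleftrightarrow> i \<in> sym_diff X Y" if "i \<noteq> k"
      using c1[of s k] c2[of s k] c1[of s i] c2[of s i] c1[of i k] c2[of i k] i k s assms(1) that
      by auto
    ultimately show ?thesis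
      by blast
  qed
  then show "Z = sym_diff X Y"
    by blast
next
  assume "Z = sym_diff X Y"
  then show "split_hyperplane S X \<inter> split_hyperplane S Y = split_hyperplane S X \<inter> split_hyperplane S Z \<and>
         split_hyperplane S X \<inter> split_hyperplane S Z = split_hyperplane S Y \<inter> split_hyperplane S Z"
    unfolding split_hyperplane_Int_eq_iff by blast
qed

lemma veldkamp_line_grass:
  assumes "s \<in> S" "X \<subseteq> S - {s}" "Y \<subseteq> S - {s}" "X \<noteq> {}" "Y \<noteq> {}" "X \<noteq> Y"
  shows "veldkamp_line (grass_points S) (grass_lines S) (\<in>) (split_hyperplane S X) (split_hyperplane S Y) =
    {split_hyperplane S X, split_hyperplane S Y, split_hyperplane S (sym_diff X Y)}"
proof -
  have "sym_diff X Y \<subseteq> S - {s}" "sym_diff X Y \<noteq> {}"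
    using assms by auto
  then show ?thesis
    unfolding veldkamp_line_def hyperplanes_grass[OF assms(1)]
    using veldkamp_condition_grass[OF assms(1-3) _ assms(6)] assms by blast
qed

definition line_with_complement :: "'p set \<Rightarrow> 'p set set \<Rightarrow> nat \<Rightarrow> 'p set \<Rightarrow> bool" where
  "line_with_complement P L k H \<longleftrightarrow> (\<exists>l\<in>L.
     let Q = {q\<in>P. \<forall>p\<in>l. \<not> collinear L (\<in>) p q} in
     H = l \<union> Q \<and> l \<inter> Q = {} \<and> isomorphic_to_G2 Q {m\<in>L. m \<subseteq> Q} (\<in>) k)"

definition point_with_complement :: "'p set \<Rightarrow> 'p set set \<Rightarrow> nat \<Rightarrow> 'p set \<Rightarrow> bool" where
  "point_with_complement P L k H \<longleftrightarrow> (\<exists>p\<in>P.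
     let Q = {q\<in>P. q \<noteq> p \<and> \<not> collinear L (\<in>) p q} in
     H = insert p Q \<and> isomorphic_to_G2 Q {m\<in>L. m \<subseteq> Q} (\<in>) k)"

lemma isomorphic_to_G2_grass_within:
  "finite S \<Longrightarrow> T \<subseteq> S \<Longrightarrow>
    isomorphic_to_G2 (grass_points T) {m \<in> grass_lines S. m \<subseteq> grass_points T} (\<in>) (card T)"
  using isomorphic_to_G2_grass[of T] finite_subset[of T S] grass_lines_within[of T S] by simp

lemma grass_points_empty:
  assumes "finite T" "card T < 2"
  shows "grass_points T = {}"
proof (rule equals0I)
  fix P
  assume "P \<in> grass_points T"
  then have "P \<subseteq> T" "card P = 2"
    by (simp_all add: grass_points_def)
  then show False
    using card_mono[OF assms(1) \<open>P \<subseteq> T\<close>] assms(2) by simp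
qed

lemma split_hyperplane_triple:
  assumes "finite S" "T \<subseteq> S" "card T = 3"
  shows "line_with_complement (grass_points S) (grass_lines S) (card S - 3) (split_hyperplane S T)"
proof -
  have "3 \<le> card S"
    using card_mono[OF assms(1,2)] assms(3) by simp
  have "(\<forall>p\<in>grass_points T. \<not> collinear (grass_lines S) (\<in>) p q) \<longleftrightarrow> q \<inter> T = {}"
    if q: "q \<in> grass_points S" for q
  proof -
    have "collinear (grass_lines S) (\<in>) p q \<longleftrightarrow> p \<inter> q \<noteq> {}" if "p \<in> grass_points T" for p
      using collinear_grass[OF \<open>3 \<le> card S\<close> subsetD[OF grass_points_mono[OF assms(2)] that] q] .
    then have "(\<forall>p\<in>grass_points T. \<not> collinear (grass_lines S) (\<in>) p q) \<longleftrightarrow> (\<forall>p\<in>grass_points T. p \<inter> q = {})"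
      by simp
    also have "\<dots> \<longleftrightarrow> \<Union> (grass_points T) \<inter> q = {}"
      by blast
    finally show ?thesis
      by (simp add: Union_grass_points[OF assms(3)] Int_commute)
  qed
  then have Q: "{q \<in> grass_points S. \<forall>p\<in>grass_points T. \<not> collinear (grass_lines S) (\<in>) p q}
      = grass_points (S - T)"
    by (auto simp: grass_points_def)
  have line: "grass_points T \<in> grass_lines S"
    using assms by (auto simp: grass_lines_def)
  have "card (S - T) = card S - 3"
    using assms card_Diff_subset[OF finite_subset[OF assms(2,1)] assms(2)] by simp
  then have "isomorphic_to_G2 (grass_points (S - T)) {m \<in> grass_lines S. m \<subseteq> grass_points (S - T)} (\<in>)
      (card S - 3)"
    using isomorphic_to_G2_grass_within[OF assms(1), of "S - T"] by simp
  moreover have "split_hyperplane S T = grass_points T \<union> grass_points (S - T)"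
    using assms(2) by (simp add: split_hyperplane_def Int_absorb1)
  moreover have "grass_points T \<inter> grass_points (S - T) = {}"
    by (rule grass_points_disjoint) blast
  ultimately show ?thesis
    unfolding line_with_complement_def by (intro bexI[OF _ line]) (simp only: Let_def Q)
qed

lemma split_hyperplane_pair:
  assumes "finite S" "P \<in> grass_points S" "3 \<le> card S"
  shows "point_with_complement (grass_points S) (grass_lines S) (card S - 2) (split_hyperplane S P)"
proof -
  have P: "P \<subseteq> S" "card P = 2" "finite P"
    using assms(2) by (auto simp: grass_points_def intro: card_ge_0_finite)
  have "q \<noteq> P \<and> \<not> collinear (grass_lines S) (\<in>) P q \<longleftrightarrow> q \<inter> P = {}"
    if q: "q \<in> grass_points S" for q
  proof -
    have "q \<noteq> {}"
      using q by (auto simp: grass_points_def)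
    then show ?thesis
      using collinear_grass[OF assms(3) assms(2) q] by blast
  qed
  then have Q: "{q \<in> grass_points S. q \<noteq> P \<and> \<not> collinear (grass_lines S) (\<in>) P q} = grass_points (S - P)"
    unfolding grass_points_def by blast
  have "Q = P" if "Q \<subseteq> P" "card Q = 2" for Q
    using card_subset_eq[OF P(3) that(1)] that(2) P(2) by simp
  then have "grass_points P = {P}"
    using P by (auto simp: grass_points_def)
  then have "split_hyperplane S P = insert P (grass_points (S - P))"
    using P by (simp add: split_hyperplane_def Int_absorb1)
  moreover have "card (S - P) = card S - 2"
    using P card_Diff_subset[OF P(3,1)] by simp
  then have "isomorphic_to_G2 (grass_points (S - P)) {m \<in> grass_lines S. m \<subseteq> grass_points (S - P)} (\<in>)
      (card S - 2)"
    using isomorphic_to_G2_grass_within[OF assms(1), of "S - P"] by simp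
  ultimately show ?thesis
    unfolding point_with_complement_def by (intro bexI[OF _ assms(2)]) (simp only: Let_def Q)
qed

lemma split_hyperplane_singleton:
  assumes "finite S" "x \<in> S"
  shows "isomorphic_to_G2 (split_hyperplane S {x}) {m \<in> grass_lines S. m \<subseteq> split_hyperplane S {x}} (\<in>)
    (card S - 1)"
proof -
  have "grass_points (S \<inter> {x}) = {}"
    by (rule grass_points_empty) (simp_all add: assms(2))
  then have "split_hyperplane S {x} = grass_points (S - {x})"
    by (simp add: split_hyperplane_def)
  then show ?thesis
    using isomorphic_to_G2_grass_within[OF assms(1), of "S - {x}"] assms by simp
qed


lemma hyperplane_grass_small_side:
  assumes "finite S" "card S = 7" "H \<in> hyperplanes (grass_points S) (grass_lines S) (\<in>)"
  obtains T where "T \<subseteq> S" "card T \<in> {1, 2, 3}" "H = split_hyperplane S T"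
proof -
  have "S \<noteq> {}"
    using assms(2) by auto
  then obtain s where "s \<in> S"
    by blast
  have "H \<in> split_hyperplane S ` {X. X \<subseteq> S - {s} \<and> X \<noteq> {}}"
    using assms(3) unfolding hyperplanes_grass[OF \<open>s \<in> S\<close>] .
  then obtain X where X: "X \<subseteq> S - {s}" "X \<noteq> {}" and HX: "H = split_hyperplane S X"
    by blast
  have XS: "X \<subseteq> S" "finite X"
    using X(1) assms(1) finite_subset by blast+
  have "card X \<le> card (S - {s})"
    using X(1) assms(1) by (intro card_mono) auto
  then have "card X \<le> 6"
    using \<open>s \<in> S\<close> assms(2) by simp
  have "0 < card X"
    using X(2) XS by (simp add: card_gt_0_iff)
  have "card (S - X) = 7 - card X"
    using card_Diff_subset[OF XS(2,1)] assms(2) by simp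
  show thesis
  proof (cases "card X \<le> 3")
    case True
    then have "card X \<in> {1, 2, 3}"
      using \<open>0 < card X\<close> by auto
    then show thesis
      using that[of X] XS HX by blast
  next
    case False
    then have "card (S - X) \<in> {1, 2, 3}"
      using \<open>card X \<le> 6\<close> \<open>card (S - X) = 7 - card X\<close> by auto
    then show thesis
      using that[of "S - X"] HX split_hyperplane_Diff[of S X] by blast
  qed
qed

lemma hyperplanes_grass_7:
  assumes "finite S" "card S = 7" and H: "H \<in> hyperplanes (grass_points S) (grass_lines S) (\<in>)"
  shows "card H = 9 \<Longrightarrow> line_with_complement (grass_points S) (grass_lines S) 4 H"
    and "card H = 11 \<Longrightarrow> point_with_complement (grass_points S) (grass_lines S) 5 H"
    and "card H = 15 \<Longrightarrow> isomorphic_to_G2 H {m \<in> grass_lines S. m \<subseteq> H} (\<in>) 6"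
proof -
  obtain T where T: "T \<subseteq> S" "card T \<in> {1, 2, 3}" and HT: "H = split_hyperplane S T"
    using hyperplane_grass_small_side[OF assms] .
  have "card (S - T) = 7 - card T"
    using T(1) assms by (simp add: card_Diff_subset finite_subset)
  then have cardH: "card H = (card T choose 2) + ((7 - card T) choose 2)"
    using card_split_hyperplane[OF assms(1), of T] T(1) HT by (simp add: Int_absorb1)
  show "card H = 9 \<Longrightarrow> line_with_complement (grass_points S) (grass_lines S) 4 H"
  proof -
    assume "card H = 9"
    then have "card T = 3"
      using T(2) cardH by (auto simp: choose_two)
    then show ?thesis
      using split_hyperplane_triple[OF assms(1) T(1)] HT assms(2) by simp
  qed
  show "card H = 11 \<Longrightarrow> point_with_complement (grass_points S) (grass_lines S) 5 H"
  proof -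
    assume "card H = 11"
    then have "T \<in> grass_points S"
      using T cardH by (auto simp: choose_two grass_points_def)
    then show ?thesis
      using split_hyperplane_pair[OF assms(1)] HT assms(2) by simp
  qed
  show "card H = 15 \<Longrightarrow> isomorphic_to_G2 H {m \<in> grass_lines S. m \<subseteq> H} (\<in>) 6"
  proof -
    assume "card H = 15"
    then obtain x where "x \<in> S" "T = {x}"
      using T cardH by (auto simp: choose_two card_1_singleton_iff)
    then show ?thesis
      using split_hyperplane_singleton[OF assms(1)] HT assms(2) by simp
  qed
qed

section \<open>Isomorphisms of point-line structures\<close>

lemma isomorphic_inc_sym:
  assumes "isomorphic_inc P L I P' L' I'"
  shows "isomorphic_inc P' L' I' P L I"
proof -
  obtain f g where fg: "bij_betw f P P'" "bij_betw g L L'" "\<forall>p\<in>P. \<forall>l\<in>L. I p l \<longleftrightarrow> I' (f p) (g l)"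
    using assms by (auto simp: isomorphic_inc_def)
  have inv: "bij_betw (inv_into P f) P' P" "bij_betw (inv_into L g) L' L"
    using fg by (auto intro: bij_betw_inv_into)
  have "I' p l \<longleftrightarrow> I (inv_into P f p) (inv_into L g l)" if "p \<in> P'" "l \<in> L'" for p l
  proof -
    have "inv_into P f p \<in> P" "inv_into L g l \<in> L"
      using inv that by (auto simp: bij_betw_def)
    moreover have "f (inv_into P f p) = p" "g (inv_into L g l) = l"
      using fg that by (auto simp: bij_betw_def f_inv_into_f)
    ultimately show ?thesis
      using fg(3) by metis
  qed
  then show ?thesis
    using inv by (auto simp: isomorphic_inc_def)
qed

lemma isomorphic_inc_trans:
  assumes "isomorphic_inc P L I P' L' I'" "isomorphic_inc P' L' I' P'' L'' I''"
  shows "isomorphic_inc P L I P'' L'' I''"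
proof -
  obtain f g where fg: "bij_betw f P P'" "bij_betw g L L'" "\<forall>p\<in>P. \<forall>l\<in>L. I p l \<longleftrightarrow> I' (f p) (g l)"
    using assms(1) by (auto simp: isomorphic_inc_def)
  obtain f' g' where fg': "bij_betw f' P' P''" "bij_betw g' L' L''"
    "\<forall>p\<in>P'. \<forall>l\<in>L'. I' p l \<longleftrightarrow> I'' (f' p) (g' l)"
    using assms(2) by (auto simp: isomorphic_inc_def)
  have "\<forall>p\<in>P. \<forall>l\<in>L. I p l \<longleftrightarrow> I'' ((f' \<circ> f) p) ((g' \<circ> g) l)"
    using fg fg' by (auto simp: bij_betw_def)
  then show ?thesis
    unfolding isomorphic_inc_def using bij_betw_trans[OF fg(1) fg'(1)] bij_betw_trans[OF fg(2) fg'(2)] by blast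
qed

lemma card_Collect_bij_betw:
  assumes "bij_betw f A B" "\<And>x. x \<in> A \<Longrightarrow> \<Phi> x \<longleftrightarrow> \<Psi> (f x)"
  shows "card {x\<in>A. \<Phi> x} = card {y\<in>B. \<Psi> y}"
proof -
  have "f ` {x\<in>A. \<Phi> x} = {y\<in>B. \<Psi> y}"
    using assms by (auto simp: bij_betw_def)
  moreover have "inj_on f {x\<in>A. \<Phi> x}"
    using assms(1) by (auto simp: bij_betw_def intro: inj_on_subset)
  ultimately show ?thesis
    using card_image by fastforce
qed

lemma configuration_isomorphic_inc:
  assumes "isomorphic_inc P L I P' L' I'" "configuration P' L' I' v r b k"
  shows "configuration P L I v r b k"
proof -
  obtain f g where fg: "bij_betw f P P'" "bij_betw g L L'" "\<forall>p\<in>P. \<forall>l\<in>L. I p l \<longleftrightarrow> I' (f p) (g l)"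
    using assms(1) by (auto simp: isomorphic_inc_def)
  have c: "finite P'" "finite L'" "card P' = v" "card L' = b"
     "\<forall>l\<in>L'. card {p\<in>P'. I' p l} = k" "\<forall>p\<in>P'. card {l\<in>L'. I' p l} = r"
     "\<forall>p\<in>P'. \<forall>q\<in>P'. p \<noteq> q \<longrightarrow> card {l\<in>L'. I' p l \<and> I' q l} \<le> 1"
    using assms(2) by (auto simp: configuration_def)
  have "finite P" "finite L"
    using fg c bij_betw_finite by blast+
  moreover have "card P = v" "card L = b"
    using fg c bij_betw_same_card by metis+
  moreover have "card {p\<in>P. I p l} = k" if "l \<in> L" for l
  proof -
    have "card {p\<in>P. I p l} = card {p\<in>P'. I' p (g l)}"
      by (rule card_Collect_bij_betw[OF fg(1)]) (use fg(3) that in blast)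
    then show ?thesis
      using c(5) fg(2) that by (auto simp: bij_betw_def)
  qed
  moreover have "card {l\<in>L. I p l} = r" if "p \<in> P" for p
  proof -
    have "card {l\<in>L. I p l} = card {l\<in>L'. I' (f p) l}"
      by (rule card_Collect_bij_betw[OF fg(2)]) (use fg(3) that in blast)
    then show ?thesis
      using c(6) fg(1) that by (auto simp: bij_betw_def)
  qed
  moreover have "card {l\<in>L. I p l \<and> I q l} \<le> 1" if "p \<in> P" "q \<in> P" "p \<noteq> q" for p q
  proof -
    have "card {l\<in>L. I p l \<and> I q l} = card {l\<in>L'. I' (f p) l \<and> I' (f q) l}"
      by (rule card_Collect_bij_betw[OF fg(2)]) (use fg(3) that in blast)
    moreover have "f p \<noteq> f q" "f p \<in> P'" "f q \<in> P'"
      using fg(1) that by (auto simp: bij_betw_def inj_on_def)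
    ultimately show ?thesis
      using c(7) by auto
  qed
  ultimately show ?thesis
    by (auto simp: configuration_def)
qed

locale set_system_iso =
  fixes P :: "'a set" and L :: "'a set set" and P' :: "'b set" and L' :: "'b set set" and f :: "'a \<Rightarrow> 'b"
  assumes bij: "bij_betw f P P'"
    and lines_subset: "l \<in> L \<Longrightarrow> l \<subseteq> P"
    and lines_image: "L' = image f ` L"
begin

lemma inj_points: "inj_on f P"
  using bij by (simp add: bij_betw_def)

lemma image_points: "f ` P = P'"
  using bij by (simp add: bij_betw_def)

lemma image_eq_image_iff: "A \<subseteq> P \<Longrightarrow> B \<subseteq> P \<Longrightarrow> f ` A = f ` B \<longleftrightarrow> A = B"
  using inj_on_image_eq_iff[OF inj_points] by blast

lemma image_subset_image_iff: "A \<subseteq> P \<Longrightarrow> B \<subseteq> P \<Longrightarrow> f ` A \<subseteq> f ` B \<longleftrightarrow> A \<subseteq> B"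
  using inj_on_image_subset_iff[OF inj_points] by blast

lemma image_Int_image: "A \<subseteq> P \<Longrightarrow> B \<subseteq> P \<Longrightarrow> f ` A \<inter> f ` B = f ` (A \<inter> B)"
  using inj_on_image_Int[OF inj_points] by blast

lemma card_image_subset: "A \<subseteq> P \<Longrightarrow> card (f ` A) = card A"
  using card_image inj_on_subset[OF inj_points] by blast

lemma hyperplane_image_iff:
  assumes "H \<subseteq> P"
  shows "geometric_hyperplane P' L' (\<in>) (f ` H) \<longleftrightarrow> geometric_hyperplane P L (\<in>) H"
proof -
  have "f ` H \<subset> P' \<longleftrightarrow> H \<subset> P"
    using image_eq_image_iff[OF assms subset_refl] assms image_points by (auto simp: psubset_eq)
  moreover have "({p\<in>P'. p \<in> f ` l} \<subseteq> f ` H \<or> card {p\<in>P'. p \<in> f ` l \<and> p \<in> f ` H} = 1) \<longleftrightarrow>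
     ({p\<in>P. p \<in> l} \<subseteq> H \<or> card {p\<in>P. p \<in> l \<and> p \<in> H} = 1)" if "l \<in> L" for l
  proof -
    have l: "l \<subseteq> P"
      using lines_subset that by blast
    have "{p\<in>P'. p \<in> f ` l} = f ` l" "{p\<in>P. p \<in> l} = l"
      "{p\<in>P'. p \<in> f ` l \<and> p \<in> f ` H} = f ` (l \<inter> H)" "{p\<in>P. p \<in> l \<and> p \<in> H} = l \<inter> H"
      using l image_points image_Int_image[OF l assms] by auto
    moreover have "card (f ` (l \<inter> H)) = card (l \<inter> H)"
      using card_image_subset l by blast
    ultimately show ?thesis
      using image_subset_image_iff[OF l assms] by simp
  qed
  ultimately show ?thesis
    unfolding geometric_hyperplane_def lines_image by auto
qed

lemma hyperplane_subset: "H \<in> hyperplanes P L (\<in>) \<Longrightarrow> H \<subseteq> P"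
  by (auto simp: hyperplanes_def geometric_hyperplane_def)

lemma hyperplanes_image: "hyperplanes P' L' (\<in>) = image f ` hyperplanes P L (\<in>)"
proof (intro equalityI subsetI)
  fix H'
  assume H': "H' \<in> hyperplanes P' L' (\<in>)"
  define H where "H = P \<inter> f -` H'"
  have "H' \<subseteq> P'"
    using H' by (auto simp: hyperplanes_def geometric_hyperplane_def)
  then have "f ` H = H'"
    using image_points unfolding H_def by auto
  moreover have "H \<subseteq> P"
    by (auto simp: H_def)
  ultimately show "H' \<in> image f ` hyperplanes P L (\<in>)"
    using H' hyperplane_image_iff[of H] by (auto simp: hyperplanes_def)
next
  fix H'
  assume "H' \<in> image f ` hyperplanes P L (\<in>)"
  then show "H' \<in> hyperplanes P' L' (\<in>)"
    using hyperplane_image_iff hyperplane_subset by (auto simp: hyperplanes_def)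
qed

lemma veldkamp_line_image:
  assumes "H1 \<subseteq> P" "H2 \<subseteq> P"
  shows "veldkamp_line P' L' (\<in>) (f ` H1) (f ` H2) = image f ` veldkamp_line P L (\<in>) H1 H2"
proof -
  have "(f ` H = f ` H1 \<or> f ` H = f ` H2 \<or>
          (f ` H1 \<inter> f ` H2 = f ` H1 \<inter> f ` H \<and> f ` H1 \<inter> f ` H = f ` H2 \<inter> f ` H)) \<longleftrightarrow>
        (H = H1 \<or> H = H2 \<or> (H1 \<inter> H2 = H1 \<inter> H \<and> H1 \<inter> H = H2 \<inter> H))"
    if "H \<in> hyperplanes P L (\<in>)" for H
    using assms hyperplane_subset[OF that] by (simp add: image_Int_image image_eq_image_iff le_infI1)
  then have "{H \<in> hyperplanes P L (\<in>). f ` H = f ` H1 \<or> f ` H = f ` H2 \<or>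
          (f ` H1 \<inter> f ` H2 = f ` H1 \<inter> f ` H \<and> f ` H1 \<inter> f ` H = f ` H2 \<inter> f ` H)} =
      veldkamp_line P L (\<in>) H1 H2"
    unfolding veldkamp_line_def by (simp cong: conj_cong)
  moreover have "{H' \<in> image f ` A. C H'} = image f ` {H \<in> A. C (f ` H)}" for A C
    by auto
  ultimately show ?thesis
    unfolding veldkamp_line_def[of P' L'] hyperplanes_image by simp
qed

lemma collinear_image:
  assumes "p \<in> P" "q \<in> P"
  shows "collinear L' (\<in>) (f p) (f q) \<longleftrightarrow> collinear L (\<in>) p q"
proof -
  have "f p \<in> f ` l \<longleftrightarrow> p \<in> l" "f q \<in> f ` l \<longleftrightarrow> q \<in> l" if "l \<in> L" for l
    using inj_on_image_mem_iff[OF inj_points] assms lines_subset[OF that] by auto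
  then show ?thesis
    unfolding collinear_def lines_image by auto
qed

lemma isomorphic: "isomorphic_inc P L (\<in>) P' L' (\<in>)"
proof -
  have "inj_on (image f) L"
    using inj_on_image_Pow[OF inj_points] lines_subset by (auto intro: inj_on_subset)
  then have "bij_betw (image f) L L'"
    using lines_image by (simp add: bij_betw_def)
  moreover have "\<forall>p\<in>P. \<forall>l\<in>L. p \<in> l \<longleftrightarrow> f p \<in> f ` l"
    using inj_on_image_mem_iff[OF inj_points] lines_subset by blast
  ultimately show ?thesis
    using bij unfolding isomorphic_inc_def by blast
qed

lemma configuration_image: "configuration P L (\<in>) v r b k \<Longrightarrow> configuration P' L' (\<in>) v r b k"
  using configuration_isomorphic_inc[OF isomorphic_inc_sym[OF isomorphic]] .

lemma restrict:
  assumes "Q \<subseteq> P"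
  shows "set_system_iso Q {m\<in>L. m \<subseteq> Q} (f ` Q) {m\<in>L'. m \<subseteq> f ` Q} f"
proof
  show "bij_betw f Q (f ` Q)"
    using inj_on_subset[OF inj_points assms] by (simp add: bij_betw_def)
  show "{m\<in>L'. m \<subseteq> f ` Q} = image f ` {m\<in>L. m \<subseteq> Q}"
    using image_subset_image_iff lines_subset assms unfolding lines_image by auto
qed auto

lemma isomorphic_to_G2_transfer: "isomorphic_to_G2 P L (\<in>) k \<Longrightarrow> isomorphic_to_G2 P' L' (\<in>) k"
  using isomorphic_inc_trans[OF isomorphic_inc_sym[OF isomorphic]] unfolding isomorphic_to_G2_def by blast

lemma isomorphic_to_G2_image:
  assumes "Q \<subseteq> P" "isomorphic_to_G2 Q {m\<in>L. m \<subseteq> Q} (\<in>) k"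
  shows "isomorphic_to_G2 (f ` Q) {m\<in>L'. m \<subseteq> f ` Q} (\<in>) k"
  using set_system_iso.isomorphic_to_G2_transfer[OF restrict[OF assms(1)] assms(2)] .

lemma noncollinear_image:
  assumes "A \<subseteq> P"
  shows "{q\<in>P'. \<forall>p\<in>f ` A. \<not> collinear L' (\<in>) p q} = f ` {q\<in>P. \<forall>p\<in>A. \<not> collinear L (\<in>) p q}"
proof (intro equalityI subsetI)
  fix q'
  assume q': "q' \<in> {q\<in>P'. \<forall>p\<in>f ` A. \<not> collinear L' (\<in>) p q}"
  then obtain q where q: "q \<in> P" "q' = f q"
    using image_points by auto
  then have "\<forall>p\<in>A. \<not> collinear L (\<in>) p q"
    using q' collinear_image assms by auto
  then show "q' \<in> f ` {q\<in>P. \<forall>p\<in>A. \<not> collinear L (\<in>) p q}"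
    using q by blast
next
  fix q'
  assume "q' \<in> f ` {q\<in>P. \<forall>p\<in>A. \<not> collinear L (\<in>) p q}"
  then obtain q where "q \<in> P" "\<forall>p\<in>A. \<not> collinear L (\<in>) p q" "q' = f q"
    by blast
  then show "q' \<in> {q\<in>P'. \<forall>p\<in>f ` A. \<not> collinear L' (\<in>) p q}"
    using collinear_image assms image_points by auto
qed

lemma line_with_complement_image:
  assumes "line_with_complement P L k H"
  shows "line_with_complement P' L' k (f ` H)"
proof -
  obtain l where l: "l \<in> L" and H: "H = l \<union> {q\<in>P. \<forall>p\<in>l. \<not> collinear L (\<in>) p q}"
    and disj: "l \<inter> {q\<in>P. \<forall>p\<in>l. \<not> collinear L (\<in>) p q} = {}"
    and G2: "isomorphic_to_G2 {q\<in>P. \<forall>p\<in>l. \<not> collinear L (\<in>) p q}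
      {m\<in>L. m \<subseteq> {q\<in>P. \<forall>p\<in>l. \<not> collinear L (\<in>) p q}} (\<in>) k"
    using assms unfolding line_with_complement_def Let_def by blast
  have lP: "l \<subseteq> P"
    using lines_subset[OF l] .
  have "f ` l \<in> L'"
    using l lines_image by blast
  moreover have "f ` l \<inter> f ` {q\<in>P. \<forall>p\<in>l. \<not> collinear L (\<in>) p q} = {}"
    using image_Int_image[OF lP, of "{q\<in>P. \<forall>p\<in>l. \<not> collinear L (\<in>) p q}"] disj by auto
  moreover have "f ` H = f ` l \<union> f ` {q\<in>P. \<forall>p\<in>l. \<not> collinear L (\<in>) p q}"
    using H by blast
  moreover have "isomorphic_to_G2 (f ` {q\<in>P. \<forall>p\<in>l. \<not> collinear L (\<in>) p q})
      {m\<in>L'. m \<subseteq> f ` {q\<in>P. \<forall>p\<in>l. \<not> collinear L (\<in>) p q}} (\<in>) k"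
    by (rule isomorphic_to_G2_image[OF _ G2]) blast
  ultimately show ?thesis
    unfolding line_with_complement_def
    by (intro bexI[of _ "f ` l"]) (simp_all only: Let_def noncollinear_image[OF lP])
qed

lemma point_with_complement_image:
  assumes "point_with_complement P L k H"
  shows "point_with_complement P' L' k (f ` H)"
proof -
  obtain p where p: "p \<in> P" and H: "H = insert p {q\<in>P. q \<noteq> p \<and> \<not> collinear L (\<in>) p q}"
    and G2: "isomorphic_to_G2 {q\<in>P. q \<noteq> p \<and> \<not> collinear L (\<in>) p q}
      {m\<in>L. m \<subseteq> {q\<in>P. q \<noteq> p \<and> \<not> collinear L (\<in>) p q}} (\<in>) k"
    using assms unfolding point_with_complement_def Let_def by blast
  have "{q\<in>P'. q \<noteq> f p \<and> \<not> collinear L' (\<in>) (f p) q} =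
      f ` {q\<in>P. \<forall>p'\<in>{p}. \<not> collinear L (\<in>) p' q} - {f p}"
    using noncollinear_image[of "{p}"] p by auto
  also have "\<dots> = f ` {q\<in>P. q \<noteq> p \<and> \<not> collinear L (\<in>) p q}"
    using p inj_on_eq_iff[OF inj_points] by auto
  finally have Q: "{q\<in>P'. q \<noteq> f p \<and> \<not> collinear L' (\<in>) (f p) q} =
      f ` {q\<in>P. q \<noteq> p \<and> \<not> collinear L (\<in>) p q}" .
  have "isomorphic_to_G2 (f ` {q\<in>P. q \<noteq> p \<and> \<not> collinear L (\<in>) p q})
      {m\<in>L'. m \<subseteq> f ` {q\<in>P. q \<noteq> p \<and> \<not> collinear L (\<in>) p q}} (\<in>) k"
    by (rule isomorphic_to_G2_image[OF _ G2]) blast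
  moreover have "f ` H = insert (f p) (f ` {q\<in>P. q \<noteq> p \<and> \<not> collinear L (\<in>) p q})"
    using H by blast
  moreover have "f p \<in> P'"
    using p image_points by blast
  ultimately show ?thesis
    unfolding point_with_complement_def by (intro bexI[of _ "f p"]) (simp_all only: Let_def Q)
qed

end

section \<open>The configuration C_6\<close>

lemma card_bitset_unit_6: "u \<in> cd_units 6 \<Longrightarrow> card (bitset u) \<in> {1, 2, 3, 4, 5, 6}"
  using card_bitset_unit[of u 6] by auto

lemma defect_count_6:
  assumes "u \<in> cd_units 6"
  shows "defect_count 6 u = 21 \<longleftrightarrow> card (bitset u) \<in> {3, 4}"
    "defect_count 6 u = 15 \<longleftrightarrow> card (bitset u) \<in> {2, 5}"
    "defect_count 6 u = 0 \<longleftrightarrow> card (bitset u) \<in> {1, 6}"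
  using card_bitset_unit_6[OF assms] unfolding defect_count_eq[OF assms] by auto

lemma kind_eq:
  "kind 21 = {u \<in> cd_units 6. card (bitset u) \<in> {3, 4}}"
  "kind 15 = {u \<in> cd_units 6. card (bitset u) \<in> {2, 5}}"
  "kind 0 = {u \<in> cd_units 6. card (bitset u) \<in> {1, 6}}"
  by (auto simp: kind_def defect_count_6)

lemma card_kinds: "card (kind 21) = 35" "card (kind 15) = 21" "card (kind 0) = 7"
proof -
  have "(6::nat) choose 1 = 6" "(6::nat) choose 2 = 15" "(6::nat) choose 3 = 20"
    "(6::nat) choose 4 = 15" "(6::nat) choose 5 = 6" "(6::nat) choose 6 = 1"
    by (simp_all add: eval_nat_numeral binomial_Suc_Suc)
  then show "card (kind 21) = 35" "card (kind 15) = 21" "card (kind 0) = 7"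
    unfolding kind_eq using card_units_of_weights[of 3 4 6] card_units_of_weights[of 2 5 6]
      card_units_of_weights[of 1 6 6] by simp_all
qed

lemma kinds_cover: "kind 21 \<union> kind 15 \<union> kind 0 = cd_units 6"
  unfolding kind_eq by (auto dest: card_bitset_unit_6)

text \<open>A unit u of A_6 is read as the splitting of {0, ..., 6} into bitset u and the rest, so
  vertex 6 stands for all six bits; the unit of a pair P is then the one whose bits form the side
  of the splitting {P, {0, ..., 6} - P} avoiding 6.\<close>

definition vertex_unit :: "nat \<Rightarrow> nat" where
  "vertex_unit i = (if i = 6 then 2 ^ 6 - 1 else 2 ^ i)"

definition pair_unit :: "nat set \<Rightarrow> nat" where
  "pair_unit P = xor (vertex_unit (Min P)) (vertex_unit (Max P))"

lemma pair_unit_doubleton: "i \<noteq> j \<Longrightarrow> pair_unit {i, j} = xor (vertex_unit i) (vertex_unit j)"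
  by (cases "i < j") (auto simp: pair_unit_def xor.commute min_def max_def)

lemma bitset_pair_unit:
  assumes "P \<in> grass_points {..<7}"
  shows "bitset (pair_unit P) = (if 6 \<in> P then {..<6} - P else P)"
proof -
  obtain i j where ij: "P = {i, j}" "i \<noteq> j" "i < 7" "j < 7"
    using assms unfolding mem_grass_points by auto
  have "bitset (vertex_unit k) = (if k = 6 then {..<6} else {k})" for k
    by (simp only: vertex_unit_def bitset_mask bitset_pow split: if_splits) simp
  then show ?thesis
    using ij by (auto simp: pair_unit_doubleton bitset_xor)
qed

lemma subset_lessThan_6:
  assumes "Q \<subseteq> {..<7}" "6 \<notin> Q"
  shows "Q \<subseteq> {..<6::nat}"
proof
  fix x
  assume "x \<in> Q"
  then have "x < 7" "x \<noteq> 6"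
    using assms by auto
  then show "x \<in> {..<6}"
    by simp
qed

lemma card_bitset_pair_unit:
  assumes "P \<in> grass_points {..<7}"
  shows "card (bitset (pair_unit P)) = (if 6 \<in> P then 5 else 2)"
proof -
  have P: "P \<subseteq> {..<7}" "card P = 2" "finite P"
    using assms by (auto simp: grass_points_def intro: finite_subset)
  have "card ({..<6} - P) = 5" if "6 \<in> P"
  proof -
    have "P \<inter> {..<6} = P - {6}"
      using P by auto
    then have "card (P \<inter> {..<6}) = 1"
      using P that by (simp add: card_Diff_singleton)
    moreover have "{..<6} - P = {..<6} - (P \<inter> {..<6})"
      by blast
    ultimately show ?thesis
      by (simp add: card_Diff_subset)
  qed
  then show ?thesis
    using bitset_pair_unit[OF assms] P by simp
qed

lemma pair_unit_mem_cd_units: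
  assumes "P \<in> grass_points {..<7}"
  shows "pair_unit P \<in> cd_units 6"
proof -
  have "P \<subseteq> {..<7}"
    using assms by (simp add: grass_points_def)
  then have "bitset (pair_unit P) \<subseteq> {..<6}"
    using bitset_pair_unit[OF assms] subset_lessThan_6 by auto
  moreover have "bitset (pair_unit P) \<noteq> {}"
    using card_bitset_pair_unit[OF assms] by (auto split: if_splits)
  ultimately show ?thesis
    by (auto simp: mem_cd_units bitset_subset_iff bitset_empty_iff intro!: Nat.gr0I)
qed

lemma inj_on_pair_unit: "inj_on pair_unit (grass_points {..<7})"
proof (rule inj_onI)
  fix P Q
  assume P: "P \<in> grass_points {..<7}" and Q: "Q \<in> grass_points {..<7}" and eq: "pair_unit P = pair_unit Q"
  then have "6 \<in> P \<longleftrightarrow> 6 \<in> Q"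
    using card_bitset_pair_unit[OF P] card_bitset_pair_unit[OF Q] by (auto split: if_splits)
  moreover have "P \<subseteq> {..<7}" "Q \<subseteq> {..<7}"
    using P Q by (auto simp: grass_points_def)
  moreover have "(if 6 \<in> P then {..<6} - P else P) = (if 6 \<in> Q then {..<6} - Q else Q)"
    using eq bitset_pair_unit[OF P] bitset_pair_unit[OF Q] by simp
  ultimately have "x \<in> P \<longleftrightarrow> x \<in> Q" for x
    by (cases "x < 6"; cases "x = 6") (auto split: if_splits)
  then show "P = Q"
    by blast
qed

lemma C6_points_eq: "C6_points = pair_unit ` grass_points {..<7}"
proof (intro equalityI subsetI)
  fix u
  assume "u \<in> C6_points"
  then have u: "u \<in> cd_units 6" "card (bitset u) \<in> {2, 5}"
    by (simp_all add: C6_points_def kind_eq)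
  have B: "bitset u \<subseteq> {..<6}"
    using u by (simp add: mem_cd_units bitset_subset_iff)
  then have "finite (bitset u)"
    using finite_subset by blast
  define P where "P = (if card (bitset u) = 2 then bitset u else insert 6 ({..<6} - bitset u))"
  have P: "P \<in> grass_points {..<7}" and "bitset (pair_unit P) = bitset u"
  proof -
    have "card ({..<6} - bitset u) = 1" if "card (bitset u) = 5"
      using B \<open>finite (bitset u)\<close> that by (simp add: card_Diff_subset)
    then show "P \<in> grass_points {..<7}"
      using u B by (auto simp: P_def grass_points_def)
    then show "bitset (pair_unit P) = bitset u"
      using B by (auto simp: bitset_pair_unit P_def)
  qed
  then show "u \<in> pair_unit ` grass_points {..<7}"
    by (auto simp: bitset_eq_iff)
next
  fix u
  assume "u \<in> pair_unit ` grass_points {..<7}"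
  then obtain P where "P \<in> grass_points {..<7}" "u = pair_unit P"
    by blast
  then show "u \<in> C6_points"
    using pair_unit_mem_cd_units card_bitset_pair_unit by (simp add: C6_points_def kind_eq)
qed

lemma bitset_pair_unit_Int_mixed:
  assumes P: "P \<in> grass_points {..<7}" "6 \<in> P" and Q: "Q \<in> grass_points {..<7}" "6 \<notin> Q"
  shows "bitset (pair_unit P) \<inter> bitset (pair_unit Q) \<noteq> {}"
proof -
  have "Q \<subseteq> {..<6}"
    using Q subset_lessThan_6 by (auto simp: grass_points_def)
  then have "bitset (pair_unit P) \<inter> bitset (pair_unit Q) = Q - P"
    using P Q by (auto simp: bitset_pair_unit)
  moreover have "Q - P \<noteq> {}"
  proof
    assume "Q - P = {}"
    moreover have "finite P" "card Q = card P"
      using P Q by (auto simp: grass_points_def intro: finite_subset)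
    ultimately have "Q = P"
      using card_subset_eq[of P Q] by blast
    then show False
      using P Q by simp
  qed
  ultimately show ?thesis
    by simp
qed

lemma bitset_pair_unit_Int:
  assumes P: "P \<in> grass_points {..<7}" and Q: "Q \<in> grass_points {..<7}" and "P \<inter> Q \<noteq> {}"
  shows "bitset (pair_unit P) \<inter> bitset (pair_unit Q) \<noteq> {}"
proof -
  consider "6 \<notin> P" "6 \<notin> Q" | "6 \<in> P" "6 \<notin> Q" | "6 \<notin> P" "6 \<in> Q" | "6 \<in> P" "6 \<in> Q"
    by blast
  then show ?thesis
  proof cases
    case 1
    then show ?thesis
      using assms by (simp add: bitset_pair_unit)
  next
    case 2
    then show ?thesis
      using bitset_pair_unit_Int_mixed[OF P _ Q] by simp
  next
    case 3
    then show ?thesis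
      using bitset_pair_unit_Int_mixed[OF Q _ P] by (simp add: Int_commute)
  next
    case 4
    have "finite (P \<union> Q)"
      using P Q by (auto simp: grass_points_def intro: card_ge_0_finite)
    moreover have "card (P \<union> Q) \<le> 4"
      using P Q card_Un_le[of P Q] by (simp add: grass_points_def)
    ultimately have "0 < card ({..<6::nat} - (P \<union> Q))"
      using diff_card_le_card_Diff[of "P \<union> Q" "{..<6::nat}"] by simp
    then have "{..<6} - (P \<union> Q) \<noteq> {}"
      by (metis card.empty less_irrefl)
    then show ?thesis
      using 4 by (auto simp: bitset_pair_unit[OF P] bitset_pair_unit[OF Q])
  qed
qed

lemma card_bitset_xor_disjoint_pairs:
  assumes P: "P \<in> grass_points {..<7}" and Q: "Q \<in> grass_points {..<7}" and "P \<inter> Q = {}"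
  shows "card (bitset (xor (pair_unit P) (pair_unit Q))) \<in> {3, 4}"
proof -
  have PQ: "P \<subseteq> {..<7}" "Q \<subseteq> {..<7}" "card P = 2" "card Q = 2" "finite P" "finite Q"
    using P Q by (auto simp: grass_points_def intro: finite_subset)
  have side: "card (({..<6} - A) - B) = 3"
    if A: "A \<in> grass_points {..<7}" "6 \<in> A" and B: "B \<in> grass_points {..<7}" "6 \<notin> B" "A \<inter> B = {}"
    for A B :: "nat set"
  proof -
    have "B \<subseteq> {..<6} - A" "finite B" "card B = 2"
      using subset_lessThan_6[of B] B by (auto simp: grass_points_def intro: finite_subset)
    moreover have "card ({..<6} - A) = 5"
      using card_bitset_pair_unit[OF A(1)] bitset_pair_unit[OF A(1)] A(2) by simp
    ultimately show ?thesis
      by (simp add: card_Diff_subset)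
  qed
  consider "6 \<notin> P" "6 \<notin> Q" | "6 \<in> P" "6 \<notin> Q" | "6 \<notin> P" "6 \<in> Q"
    using assms(3) by blast
  then show ?thesis
  proof cases
    case 1
    then have "bitset (xor (pair_unit P) (pair_unit Q)) = P \<union> Q"
      using assms(3) by (auto simp: bitset_xor bitset_pair_unit[OF P] bitset_pair_unit[OF Q])
    then show ?thesis
      using PQ assms(3) by (simp add: card_Un_disjoint)
  next
    case 2
    then have "bitset (xor (pair_unit P) (pair_unit Q)) = ({..<6} - P) - Q"
      using subset_lessThan_6[OF PQ(2)] assms(3)
      by (auto simp: bitset_xor bitset_pair_unit[OF P] bitset_pair_unit[OF Q])
    then show ?thesis
      using side[OF P _ Q] 2 assms(3) by simp
  next
    case 3
    then have "bitset (xor (pair_unit P) (pair_unit Q)) = ({..<6} - Q) - P"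
      using subset_lessThan_6[OF PQ(1)] assms(3)
      by (auto simp: bitset_xor bitset_pair_unit[OF P] bitset_pair_unit[OF Q])
    then show ?thesis
      using side[OF Q _ P] 3 assms(3) by (simp add: Int_commute)
  qed
qed

lemma pair_unit_xor:
  assumes "a \<noteq> b" "b \<noteq> c" "a \<noteq> c"
  shows "xor (pair_unit {a, b}) (pair_unit {b, c}) = pair_unit {a, c}"
  using assms by (simp add: pair_unit_doubleton xor.assoc flip: xor.assoc[of "vertex_unit a"])

lemma pair_unit_image_grass_line:
  assumes "l \<in> grass_lines {..<7}"
  shows "pair_unit ` l \<in> C6_lines"
proof -
  obtain a b c where abc: "a \<noteq> b" "b \<noteq> c" "a \<noteq> c" "{a, b, c} \<subseteq> {..<7}"
    and l: "l = grass_points {a, b, c}"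
    using assms by (rule grass_lines_cases)
  have pts: "{a, b} \<in> grass_points {..<7}" "{b, c} \<in> grass_points {..<7}"
    using abc by (auto intro: doubleton_mem_grass_points)
  have "pair_unit ` l = {pair_unit {a, b}, pair_unit {b, c}, xor (pair_unit {a, b}) (pair_unit {b, c})}"
    using l abc by (simp add: grass_points_triple pair_unit_xor)
  moreover have "pair_unit {a, b} \<noteq> pair_unit {b, c}"
    using inj_on_pair_unit pts abc by (auto simp: inj_on_def doubleton_eq_iff)
  ultimately have "distinguished_triple 6 (pair_unit ` l)"
    unfolding distinguished_triple_iff using pts pair_unit_mem_cd_units by blast
  moreover have "bitset (pair_unit P) \<inter> bitset (pair_unit Q) \<noteq> {}" if "P \<in> l" "Q \<in> l" for P Q
  proof (rule bitset_pair_unit_Int)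
    show "P \<in> grass_points {..<7}" "Q \<in> grass_points {..<7}"
      using that grass_lines_subset[OF assms] by blast+
    show "P \<inter> Q \<noteq> {}"
      using that abc(1-3) l by (auto simp: grass_points_triple)
  qed
  then have "bit_overlapping (pair_unit ` l)"
    unfolding bit_overlapping_def by blast
  moreover have "pair_unit ` l \<subseteq> C6_points"
    using C6_points_eq grass_lines_subset[OF assms] by blast
  ultimately show ?thesis
    by (simp add: C6_lines_def defective_triple_iff)
qed

lemma C6_line_is_pair_unit_image:
  assumes "T \<in> C6_lines"
  shows "T \<in> image pair_unit ` grass_lines {..<7}"
proof -
  have "defective_triple 6 T" and sub: "T \<subseteq> C6_points"
    using assms by (auto simp: C6_lines_def)
  then obtain x y where xy: "x \<noteq> y" "T = {x, y, xor x y}"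
    by (auto simp: defective_triple_iff distinguished_triple_iff)
  moreover have "x \<in> pair_unit ` grass_points {..<7}" "y \<in> pair_unit ` grass_points {..<7}"
    using sub xy C6_points_eq by auto
  ultimately obtain P Q where PQ: "P \<in> grass_points {..<7}" "Q \<in> grass_points {..<7}"
    "x = pair_unit P" "y = pair_unit Q"
    by blast
  have "P \<inter> Q \<noteq> {}"
  proof
    assume "P \<inter> Q = {}"
    then have "card (bitset (xor x y)) \<in> {3, 4}"
      using PQ card_bitset_xor_disjoint_pairs by simp
    moreover obtain R where "R \<in> grass_points {..<7}" "xor x y = pair_unit R"
      using sub xy C6_points_eq by auto
    ultimately show False
      using card_bitset_pair_unit[of R] by (simp split: if_splits)
  qed
  moreover have "P \<noteq> Q"
    using xy PQ by auto
  ultimately obtain a b c where abc: "P = {a, b}" "Q = {b, c}" "a \<noteq> b" "b \<noteq> c" "a \<noteq> c"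
    "{a, b, c} \<subseteq> {..<7}"
    using grass_points_meet[OF PQ(1,2)] by blast
  then have "T = pair_unit ` grass_points {a, b, c}"
    using xy PQ by (simp add: grass_points_triple pair_unit_xor)
  then show ?thesis
    using grass_lines_intro[OF abc(3-6)] by blast
qed

lemma C6_lines_eq: "C6_lines = image pair_unit ` grass_lines {..<7}"
  using pair_unit_image_grass_line C6_line_is_pair_unit_image by blast

lemma C6_set_system_iso:
  "set_system_iso (grass_points {..<7}) (grass_lines {..<7}) C6_points C6_lines pair_unit"
proof
  show "bij_betw pair_unit (grass_points {..<7}) C6_points"
    using inj_on_pair_unit C6_points_eq by (simp add: bij_betw_def)
qed (simp_all add: C6_lines_eq grass_lines_subset)


section \<open>Hyperplanes and Veldkamp lines of C_6\<close>

definition unit_hyperplane :: "nat \<Rightarrow> nat set" where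
  "unit_hyperplane m = pair_unit ` split_hyperplane {..<7} (bitset m)"

lemma bitset_image_cd_units: "bitset ` cd_units N = Pow {..<N} - {{}}"
proof -
  have "cd_units N = {..<2 ^ N} - {0}"
    by (auto simp: mem_cd_units)
  moreover have "bitset ` ({..<2 ^ N} - {0}) = bitset ` {..<2 ^ N} - bitset ` {0}"
    using bij_betw_bitset[of N] by (intro inj_on_image_set_diff) (auto simp: bij_betw_def)
  ultimately show ?thesis
    using bij_betw_bitset[of N] by (simp add: bij_betw_def)
qed

lemma hyperplanes_C6: "hyperplanes C6_points C6_lines (\<in>) = unit_hyperplane ` cd_units 6"
proof -
  have "hyperplanes (grass_points {..<7}) (grass_lines {..<7}) (\<in>) =
      split_hyperplane {..<7} ` {X. X \<subseteq> {..<7::nat} - {6} \<and> X \<noteq> {}}"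
    by (rule hyperplanes_grass) simp
  moreover have "{X. X \<subseteq> {..<7::nat} - {6} \<and> X \<noteq> {}} = bitset ` cd_units 6"
    by (auto simp: bitset_image_cd_units)
  ultimately show ?thesis
    unfolding set_system_iso.hyperplanes_image[OF C6_set_system_iso]
    by (simp add: image_image unit_hyperplane_def)
qed

lemma bitset_unit_subset:
  assumes "u \<in> cd_units 6"
  shows "bitset u \<subseteq> {..<7} - {6}"
proof -
  have "bitset u \<subseteq> {..<6}"
    using assms by (simp add: mem_cd_units bitset_subset_iff)
  then show ?thesis
    by auto
qed

lemma inj_on_unit_hyperplane: "inj_on unit_hyperplane (cd_units 6)"
proof (rule inj_onI)
  fix a b
  assume ab: "a \<in> cd_units 6" "b \<in> cd_units 6" "unit_hyperplane a = unit_hyperplane b"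
  then have "split_hyperplane {..<7} (bitset a) = split_hyperplane {..<7} (bitset b)"
    using set_system_iso.image_eq_image_iff[OF C6_set_system_iso split_hyperplane_subset split_hyperplane_subset]
    by (simp add: unit_hyperplane_def)
  moreover have "inj_on (split_hyperplane {..<7::nat}) (Pow ({..<7} - {6}))"
    by (rule inj_on_split_hyperplane) simp
  ultimately have "bitset a = bitset b"
    using bitset_unit_subset[OF ab(1)] bitset_unit_subset[OF ab(2)] by (auto dest: inj_onD)
  then show "a = b"
    by (simp add: bitset_eq_iff)
qed

definition hyperplane_unit :: "nat set \<Rightarrow> nat" where
  "hyperplane_unit = the_inv_into (cd_units 6) unit_hyperplane"

lemma bij_betw_hyperplane_unit:
  "bij_betw hyperplane_unit (hyperplanes C6_points C6_lines (\<in>)) (cd_units 6)"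
  unfolding hyperplane_unit_def hyperplanes_C6
  by (rule bij_betw_the_inv_into) (simp add: bij_betw_def inj_on_unit_hyperplane)

lemma hyperplane_unit_unit_hyperplane: "m \<in> cd_units 6 \<Longrightarrow> hyperplane_unit (unit_hyperplane m) = m"
  unfolding hyperplane_unit_def using inj_on_unit_hyperplane by (rule the_inv_into_f_f)

lemma veldkamp_line_C6:
  assumes "a \<in> cd_units 6" "b \<in> cd_units 6" "a \<noteq> b"
  shows "veldkamp_line C6_points C6_lines (\<in>) (unit_hyperplane a) (unit_hyperplane b) =
    {unit_hyperplane a, unit_hyperplane b, unit_hyperplane (xor a b)}"
proof -
  have "bitset a \<noteq> {}" "bitset b \<noteq> {}" "bitset a \<noteq> bitset b"
    using assms by (auto simp: mem_cd_units bitset_empty_iff bitset_eq_iff)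
  then have "veldkamp_line (grass_points {..<7}) (grass_lines {..<7}) (\<in>)
      (split_hyperplane {..<7} (bitset a)) (split_hyperplane {..<7} (bitset b)) =
      {split_hyperplane {..<7} (bitset a), split_hyperplane {..<7} (bitset b),
       split_hyperplane {..<7} (bitset (xor a b))}"
    using veldkamp_line_grass[of 6 "{..<7::nat}" "bitset a" "bitset b"]
      bitset_unit_subset[OF assms(1)] bitset_unit_subset[OF assms(2)] by (simp add: bitset_xor)
  then show ?thesis
    unfolding unit_hyperplane_def
    by (simp add: set_system_iso.veldkamp_line_image[OF C6_set_system_iso split_hyperplane_subset split_hyperplane_subset])
qed

lemma veldkamp_lines_C6:
  "veldkamp_lines C6_points C6_lines (\<in>) =
    {{unit_hyperplane a, unit_hyperplane b, unit_hyperplane (xor a b)} | a b.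
       a \<in> cd_units 6 \<and> b \<in> cd_units 6 \<and> a \<noteq> b}"
proof (intro equalityI subsetI)
  fix V
  assume "V \<in> veldkamp_lines C6_points C6_lines (\<in>)"
  then obtain a b where "a \<in> cd_units 6" "b \<in> cd_units 6" "unit_hyperplane a \<noteq> unit_hyperplane b"
    "V = veldkamp_line C6_points C6_lines (\<in>) (unit_hyperplane a) (unit_hyperplane b)"
    unfolding veldkamp_lines_def hyperplanes_C6 by blast
  moreover then have "a \<noteq> b"
    by blast
  ultimately show "V \<in> {{unit_hyperplane a, unit_hyperplane b, unit_hyperplane (xor a b)} | a b.
       a \<in> cd_units 6 \<and> b \<in> cd_units 6 \<and> a \<noteq> b}"
    using veldkamp_line_C6 by blast
next
  fix V
  assume "V \<in> {{unit_hyperplane a, unit_hyperplane b, unit_hyperplane (xor a b)} | a b.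
       a \<in> cd_units 6 \<and> b \<in> cd_units 6 \<and> a \<noteq> b}"
  then obtain a b where ab: "a \<in> cd_units 6" "b \<in> cd_units 6" "a \<noteq> b"
    "V = {unit_hyperplane a, unit_hyperplane b, unit_hyperplane (xor a b)}"
    by blast
  moreover have "unit_hyperplane a \<noteq> unit_hyperplane b"
    using ab inj_on_unit_hyperplane by (auto simp: inj_on_def)
  ultimately show "V \<in> veldkamp_lines C6_points C6_lines (\<in>)"
    unfolding veldkamp_lines_def hyperplanes_C6 using veldkamp_line_C6 by blast
qed

lemma bij_betw_veldkamp_lines:
  "bij_betw (\<lambda>V. hyperplane_unit ` V) (veldkamp_lines C6_points C6_lines (\<in>)) {T. distinguished_triple 6 T}"
proof -
  have units: "hyperplane_unit ` {unit_hyperplane a, unit_hyperplane b, unit_hyperplane (xor a b)} = {a, b, xor a b}"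
    if "a \<in> cd_units 6" "b \<in> cd_units 6" "a \<noteq> b" for a b
    using that xor_mem_cd_units[OF that] by (simp add: hyperplane_unit_unit_hyperplane)
  have "(\<lambda>V. hyperplane_unit ` V) ` veldkamp_lines C6_points C6_lines (\<in>) = {T. distinguished_triple 6 T}"
  proof (intro equalityI subsetI)
    fix T
    assume "T \<in> (\<lambda>V. hyperplane_unit ` V) ` veldkamp_lines C6_points C6_lines (\<in>)"
    then obtain a b where "a \<in> cd_units 6" "b \<in> cd_units 6" "a \<noteq> b"
      "T = hyperplane_unit ` {unit_hyperplane a, unit_hyperplane b, unit_hyperplane (xor a b)}"
      unfolding veldkamp_lines_C6 by blast
    then show "T \<in> {T. distinguished_triple 6 T}"
      using units unfolding distinguished_triple_iff by blast
  next
    fix T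
    assume "T \<in> {T. distinguished_triple 6 T}"
    then obtain a b where ab: "a \<in> cd_units 6" "b \<in> cd_units 6" "a \<noteq> b" "T = {a, b, xor a b}"
      unfolding distinguished_triple_iff by blast
    then have "T = hyperplane_unit ` {unit_hyperplane a, unit_hyperplane b, unit_hyperplane (xor a b)}"
      using units by simp
    then show "T \<in> (\<lambda>V. hyperplane_unit ` V) ` veldkamp_lines C6_points C6_lines (\<in>)"
      unfolding veldkamp_lines_C6 using ab by blast
  qed
  moreover have "\<Union> (veldkamp_lines C6_points C6_lines (\<in>)) \<subseteq> hyperplanes C6_points C6_lines (\<in>)"
    by (auto simp: veldkamp_lines_def veldkamp_line_def)
  then have "inj_on (\<lambda>V. hyperplane_unit ` V) (veldkamp_lines C6_points C6_lines (\<in>))"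
    using bij_betw_hyperplane_unit by (intro inj_on_image) (auto simp: bij_betw_def intro: inj_on_subset)
  ultimately show ?thesis
    by (simp add: bij_betw_def)
qed

lemma card_unit_hyperplane:
  assumes "m \<in> cd_units 6"
  shows "card (unit_hyperplane m) = (card (bitset m) choose 2) + ((7 - card (bitset m)) choose 2)"
proof -
  have B: "bitset m \<subseteq> {..<7}"
    using bitset_unit_subset[OF assms] by blast
  then have "card ({..<7} - bitset m) = 7 - card (bitset m)"
    by (simp add: card_Diff_subset finite_subset)
  moreover have "{..<7} \<inter> bitset m = bitset m"
    using B by blast
  ultimately show ?thesis
    unfolding unit_hyperplane_def
    by (simp add: set_system_iso.card_image_subset[OF C6_set_system_iso split_hyperplane_subset] card_split_hyperplane)
qed

lemma hyperplane_unit_image_of_size: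
  "hyperplane_unit ` {H \<in> hyperplanes C6_points C6_lines (\<in>). card H = n} =
    {m \<in> cd_units 6. (card (bitset m) choose 2) + ((7 - card (bitset m)) choose 2) = n}"
proof -
  have "{H \<in> hyperplanes C6_points C6_lines (\<in>). card H = n} =
      unit_hyperplane ` {m \<in> cd_units 6. card (unit_hyperplane m) = n}"
    unfolding hyperplanes_C6 by blast
  then show ?thesis
    by (auto simp: image_image hyperplane_unit_unit_hyperplane card_unit_hyperplane)
qed

lemma choose_two_sum_7:
  assumes "k \<in> {1, 2, 3, 4, 5, 6::nat}"
  shows "(k choose 2) + ((7 - k) choose 2) = 9 \<longleftrightarrow> k \<in> {3, 4}"
    "(k choose 2) + ((7 - k) choose 2) = 11 \<longleftrightarrow> k \<in> {2, 5}"
    "(k choose 2) + ((7 - k) choose 2) = 15 \<longleftrightarrow> k \<in> {1, 6}"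
  using assms by (auto simp: choose_two)

lemma hyperplane_unit_kinds:
  "hyperplane_unit ` {H \<in> hyperplanes C6_points C6_lines (\<in>). card H = 9} = kind 21"
  "hyperplane_unit ` {H \<in> hyperplanes C6_points C6_lines (\<in>). card H = 11} = kind 15"
  "hyperplane_unit ` {H \<in> hyperplanes C6_points C6_lines (\<in>). card H = 15} = kind 0"
  unfolding hyperplane_unit_image_of_size kind_eq
  using choose_two_sum_7[OF card_bitset_unit_6] by blast+

lemma hyperplanes_C6_structure:
  assumes "H \<in> hyperplanes C6_points C6_lines (\<in>)"
  shows "card H = 9 \<Longrightarrow> line_with_complement C6_points C6_lines 4 H"
    and "card H = 11 \<Longrightarrow> point_with_complement C6_points C6_lines 5 H"
    and "card H = 15 \<Longrightarrow> isomorphic_to_G2 H {m \<in> C6_lines. m \<subseteq> H} (\<in>) 6"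
proof -
  interpret set_system_iso "grass_points {..<7}" "grass_lines {..<7}" C6_points C6_lines pair_unit
    by (rule C6_set_system_iso)
  obtain H0 where H0: "H0 \<in> hyperplanes (grass_points {..<7}) (grass_lines {..<7}) (\<in>)" "H = pair_unit ` H0"
    using assms hyperplanes_image by auto
  have "card H = card H0"
    using H0 card_image_subset hyperplane_subset by simp
  then show "card H = 9 \<Longrightarrow> line_with_complement C6_points C6_lines 4 H"
    and "card H = 11 \<Longrightarrow> point_with_complement C6_points C6_lines 5 H"
    and "card H = 15 \<Longrightarrow> isomorphic_to_G2 H {m \<in> C6_lines. m \<subseteq> H} (\<in>) 6"
    using hyperplanes_grass_7[of "{..<7}" H0] H0 line_with_complement_image point_with_complement_image
      isomorphic_to_G2_image[OF hyperplane_subset[OF H0(1)]] by simp_all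
qed

lemma configuration_C6: "configuration C6_points C6_lines (\<in>) 21 5 35 3"
proof -
  have "(7::nat) choose 2 = 21" "(7::nat) choose 3 = 35"
    by (simp_all add: eval_nat_numeral binomial_Suc_Suc)
  then show ?thesis
    using set_system_iso.configuration_image[OF C6_set_system_iso configuration_grass[of "{..<7::nat}"]]
    by simp
qed

lemma isomorphic_to_G2_C6: "isomorphic_to_G2 C6_points C6_lines (\<in>) 7"
  using set_system_iso.isomorphic_to_G2_transfer[OF C6_set_system_iso isomorphic_to_G2_grass[of "{..<7::nat}"]]
  by simp

theorem mainTheorem4:
  shows
   "\<comment> \<open>(i)\<close>
    card (kind 21) = 35 \<and> card (kind 15) = 21 \<and> card (kind 0) = 7 \<and>
    kind 21 \<union> kind 15 \<union> kind 0 = cd_units 6 \<and>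
    \<comment> \<open>(ii)\<close>
    configuration C6_points C6_lines (\<in>) 21 5 35 3 \<and>
    isomorphic_to_G2 C6_points C6_lines (\<in>) 7 \<and>
    \<comment> \<open>(iii)\<close>
    card (hyperplanes C6_points C6_lines (\<in>)) = 63 \<and>
    (\<exists>\<phi> :: nat set \<Rightarrow> nat.
       bij_betw \<phi> (hyperplanes C6_points C6_lines (\<in>)) (cd_units 6) \<and>
       bij_betw (\<lambda>V. \<phi> ` V) (veldkamp_lines C6_points C6_lines (\<in>))
                {T. distinguished_triple 6 T} \<and>
       \<phi> ` {H \<in> hyperplanes C6_points C6_lines (\<in>). card H = 9} = kind 21 \<and>
       \<phi> ` {H \<in> hyperplanes C6_points C6_lines (\<in>). card H = 11} = kind 15 \<and>
       \<phi> ` {H \<in> hyperplanes C6_points C6_lines (\<in>). card H = 15} = kind 0) \<and>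
    \<comment> \<open>structure of the three types of hyperplanes\<close>
    (\<forall>H \<in> hyperplanes C6_points C6_lines (\<in>). card H = 9 \<longrightarrow>
       (\<exists>l \<in> C6_lines.
          let Q = {q \<in> C6_points. \<forall>p \<in> l. \<not> collinear C6_lines (\<in>) p q} in
          H = l \<union> Q \<and> l \<inter> Q = {} \<and>
          isomorphic_to_G2 Q {m \<in> C6_lines. m \<subseteq> Q} (\<in>) 4)) \<and>
    (\<forall>H \<in> hyperplanes C6_points C6_lines (\<in>). card H = 11 \<longrightarrow>
       (\<exists>p \<in> C6_points.
          let Q = {q \<in> C6_points. q \<noteq> p \<and> \<not> collinear C6_lines (\<in>) p q} in
          H = insert p Q \<and>
          isomorphic_to_G2 Q {m \<in> C6_lines. m \<subseteq> Q} (\<in>) 5)) \<and>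
    (\<forall>H \<in> hyperplanes C6_points C6_lines (\<in>). card H = 15 \<longrightarrow>
       isomorphic_to_G2 H {m \<in> C6_lines. m \<subseteq> H} (\<in>) 6)"
proof -
  have "card (hyperplanes C6_points C6_lines (\<in>)) = 63"
    using bij_betw_same_card[OF bij_betw_hyperplane_unit] by (simp add: cd_units_def)
  then show ?thesis
    using card_kinds kinds_cover configuration_C6 isomorphic_to_G2_C6
      bij_betw_hyperplane_unit bij_betw_veldkamp_lines hyperplane_unit_kinds
      hyperplanes_C6_structure[unfolded line_with_complement_def point_with_complement_def]
    by blast
qed

end
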